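(* Let $d\in\mathbb N$, let $\lambda_1,\dots,\lambda_d\in\mathbb C$ be the roots of an irreducible polynomial of degree $d$ with integer coefficients, and let $c_1,\dots,c_d\in\mathbb C$. Assume the dominant root condition: $\lambda_1$ is real, $\lambda_1>1$, $\lambda_1>\max\{|\lambda_2|,\dots,|\lambda_d|\}$, and $c_1\ne0$. Assume that $a_k=c_1\lambda_1^k+\dots+c_d\lambda_d^k$ is a positive integer for every $k\in\mathbb N$, and let $S_n(\omega)=\sum_{k=1}^n\cos(2\pi a_k\omega)$, $\omega\in[0,1]$, viewed as a random variable on $[0,1]$ with Lebesgue measure. Then for every $m\in\mathbb N$ there exist an integer $n_1(m)$ and integers $w_m,b_m\in\mathbb Z$, depending only on $m$ and on $c_1,\dots,c_d,\lambda_1,\dots,\lambda_d$, such that $$\kappa_m(S_n)=2^{-m}(w_m n+b_m)\qquad\text{for all } n>n_1(m).$$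
   Context: For a bounded random variable $X$, its $m$-th cumulant is $\kappa_m(X)=\frac{d^m}{dt^m}\log\mathbb E[e^{tX}]\big|_{t=0}$. *)

theory Defs
  imports "HOL-Analysis.Analysis" "HOL-Computational_Algebra.Polynomial"
begin

definition cumulant :: "real measure \<Rightarrow> nat \<Rightarrow> (real \<Rightarrow> real) \<Rightarrow> real" where
  "cumulant M m X = (deriv ^^ m) (\<lambda>t. ln (integral\<^sup>L M (\<lambda>\<omega>. exp (t * X \<omega>)))) 0"

definition lin_rec_seq :: "nat \<Rightarrow> (nat \<Rightarrow> complex) \<Rightarrow> (nat \<Rightarrow> complex) \<Rightarrow> nat \<Rightarrow> complex" where
  "lin_rec_seq d c lam k = (\<Sum>i=1..d. c i * lam i ^ k)"

definition S_sum :: "(nat \<Rightarrow> complex) \<Rightarrow> nat \<Rightarrow> real \<Rightarrow> real" where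
  "S_sum a n \<omega> = (\<Sum>k=1..n. cos (2 * pi * Re (a k) * \<omega>))"

end

theory Submission
  imports Defs "HOL-Computational_Algebra.Polynomial_Factorial"
begin

text \<open>
  Expanding powers of the cosine sum and using that \<open>cos (2 * pi * N * \<omega>)\<close> integrates to
  \<open>of_bool (N = 0)\<close> over [0,1], the k-th moment of S_n is \<open>2 ^ (-k)\<close> times the number of
  k-tuples of indices in {1..n} together with signs e such that the signed sum
  e_1 a_{k_1} + ... + e_k a_{k_k} vanishes. Hence \<open>2 ^ m\<close> times the m-th cumulant is an integer,
  and by the moment-cumulant recursion the cumulant, as a function of the index set {1..n},
  is a sum over m-tuples of indices.

  The dominant root makes the vanishing of such signed sums a local and translation invariant
  condition. Since a_{k+K} = sum_l c_l lam_l^K lam_l^k, a signed sum of bounded length and span,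
  shifted by K, either vanishes for all K (its integer polynomial vanishes at lam_1, hence at
  all conjugates lam_l) or has modulus at least a constant times lam_1^K; a pigeonhole argument
  then isolates a top block of indices that dominates the rest. Consequently moments and
  cumulants are translation invariant beyond some threshold, and across a gap of some length G
  the moment generating function factorizes up to order m, so the cumulant is additive there.
  The Moebius coefficients of such a set function vanish on sets of diameter at least m G and
  are translation invariant far out, so the increments of the cumulant in n are eventually
  constant.
\<close>

section \<open>Conjugate roots of an irreducible integer polynomial\<close>

lemma map_poly_of_int_add:
  "map_poly (of_int :: int \<Rightarrow> 'a::comm_ring_1) (p + q) = map_poly of_int p + map_poly of_int q"
  by (rule poly_eqI) (simp add: coeff_map_poly)

lemma map_poly_of_int_mult:
  "map_poly (of_int :: int \<Rightarrow> 'a::comm_ring_1) (p * q) = map_poly of_int p * map_poly of_int q"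
  by (rule poly_eqI) (simp add: coeff_map_poly coeff_mult)

lemma least_degree_root_poly_dvd:
  fixes g q :: "int poly" and z :: "'a::{idom,ring_char_0}"
  assumes g: "g \<noteq> 0" "poly (map_poly of_int g) z = 0"
    and least: "\<And>h. h \<noteq> 0 \<Longrightarrow> poly (map_poly of_int h) z = 0 \<Longrightarrow> degree g \<le> degree h"
    and q: "poly (map_poly of_int q) z = 0"
  obtains a where "a \<noteq> 0" "g dvd smult a q"
proof -
  define r where "r = pseudo_mod q g"
  obtain a h where ah: "a \<noteq> 0" "smult a q = g * h + r"
    using pseudo_mod(1)[OF g(1), of q] unfolding r_def by blast
  have "poly (map_poly of_int r) z = 0"
    using arg_cong[OF ah(2), of "\<lambda>p. poly (map_poly of_int p) z"] g(2) q
    by (simp add: map_poly_of_int_add map_poly_of_int_mult map_poly_smult)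
  then have "r = 0"
    using least[of r] pseudo_mod(2)[OF g(1), of q] unfolding r_def by fastforce
  then show ?thesis using that ah by auto
qed

lemma irreducible_int_poly_dvd_if_common_root:
  fixes p q :: "int poly" and z :: "'a::{idom,ring_char_0}"
  assumes irr: "irreducible p"
    and p: "poly (map_poly of_int p) z = 0" and q: "poly (map_poly of_int q) z = 0"
  shows "p dvd q"
proof -
  have no_const_root: "poly (map_poly of_int h) z \<noteq> 0" if "h \<noteq> 0" "degree h = 0" for h :: "int poly"
    using that by (elim degree_eq_zeroE) (simp add: map_poly_pCons)
  have p0: "p \<noteq> 0" and prime: "prime_elem p"
    using irr irreducible_imp_prime_poly by auto
  obtain g where g: "g \<noteq> 0" "poly (map_poly of_int g) z = 0"
    and least: "\<And>h. h \<noteq> 0 \<Longrightarrow> poly (map_poly of_int h) z = 0 \<Longrightarrow> degree g \<le> degree h"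
    using ex_has_least_nat[of "\<lambda>h. h \<noteq> 0 \<and> poly (map_poly of_int h) z = 0" p degree] p0 p
    by blast
  obtain a where a: "a \<noteq> 0" "g dvd smult a p"
    using least_degree_root_poly_dvd[OF g least p] .
  then obtain h where h: "smult a p = g * h" by (elim dvdE)
  have "\<not> p dvd h"
  proof
    assume "p dvd h"
    then obtain h' where "h = p * h'" by (elim dvdE)
    with h have "[:a:] * p = (g * h') * p" by (simp add: mult_ac)
    with p0 have "[:a:] = g * h'" by (metis mult_cancel_right)
    with a(1) g(1) have "degree g = 0"
      by (metis degree_mult_eq degree_pCons_0 add_is_0 mult_zero_right pCons_eq_0_iff)
    with g no_const_root show False by blast
  qed
  moreover have "p dvd g * h" by (metis h dvd_smult dvd_refl)
  ultimately have "p dvd g" using prime by (simp add: prime_elem_dvd_mult_iff)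
  obtain b where b: "b \<noteq> 0" "g dvd smult b q"
    using least_degree_root_poly_dvd[OF g least q] .
  have "\<not> p dvd [:b:]"
    using no_const_root[OF p0] p b(1) dvd_imp_degree_le[of p "[:b:]"] by auto
  moreover have "p dvd [:b:] * q"
    using dvd_trans[OF \<open>p dvd g\<close> b(2)] by simp
  ultimately show ?thesis using prime by (simp only: prime_elem_dvd_mult_iff) blast
qed

lemma irreducible_int_poly_conjugate_root:
  fixes p q :: "int poly" and z :: "nat \<Rightarrow> 'a::{idom,ring_char_0}"
  assumes "irreducible p" and p: "map_poly of_int p = smult c (\<Prod>i\<in>I. [:- z i, 1:])"
    and "finite I" "j \<in> I" "l \<in> I" and q: "poly (map_poly of_int q) (z j) = 0"
  shows "poly (map_poly of_int q) (z l) = 0"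
proof -
  have root: "poly (map_poly of_int p) (z i) = 0" if "i \<in> I" for i
  proof -
    have "(\<Prod>i'\<in>I. poly [:- z i', 1:] (z i)) = 0"
      using that \<open>finite I\<close> by (intro prod_zero bexI[of _ i]) simp_all
    then show ?thesis
      unfolding p by (simp add: poly_prod)
  qed
  have "p dvd q"
    using irreducible_int_poly_dvd_if_common_root[OF \<open>irreducible p\<close> root[OF \<open>j \<in> I\<close>] q] .
  then obtain h where "q = p * h"
    by (elim dvdE)
  then show ?thesis
    using root[OF \<open>l \<in> I\<close>] by (simp add: map_poly_of_int_mult)
qed

definition tuples :: "nat \<Rightarrow> 'a set \<Rightarrow> 'a list set" where
  "tuples n A = {xs. set xs \<subseteq> A \<and> length xs = n}"

lemma finite_tuples: "finite A \<Longrightarrow> finite (tuples n A)"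
  unfolding tuples_def by (rule finite_lists_length_eq)

lemma tuples_0 [simp]: "tuples 0 A = {[]}"
  unfolding tuples_def by auto

lemma sum_tuples_Suc:
  assumes "finite A"
  shows "(\<Sum>xs\<in>tuples (Suc n) A. g xs) = (\<Sum>xs\<in>tuples n A. \<Sum>x\<in>A. g (x # xs))"
proof -
  have "inj_on (\<lambda>(xs, x). x # xs) (tuples n A \<times> A)"
    by (auto simp: inj_on_def)
  then have "(\<Sum>xs\<in>tuples (Suc n) A. g xs) = (\<Sum>(xs, x)\<in>tuples n A \<times> A. g (x # xs))"
    unfolding tuples_def lists_length_Suc_eq by (subst sum.reindex) (auto simp: case_prod_beta)
  then show ?thesis
    by (simp add: sum.cartesian_product)
qed

lemma power_sum_eq_sum_tuples:
  fixes f :: "'a \<Rightarrow> 'b::comm_semiring_1"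
  assumes "finite A"
  shows "(\<Sum>k\<in>A. f k) ^ n = (\<Sum>xs\<in>tuples n A. \<Prod>x\<leftarrow>xs. f x)"
proof (induction n)
  case (Suc n)
  have "(\<Sum>k\<in>A. f k) ^ Suc n = (\<Sum>k\<in>A. f k) * (\<Sum>xs\<in>tuples n A. \<Prod>x\<leftarrow>xs. f x)"
    using Suc by simp
  also have "\<dots> = (\<Sum>xs\<in>tuples n A. \<Sum>x\<in>A. f x * (\<Prod>y\<leftarrow>xs. f y))"
    by (simp add: sum_distrib_left sum_distrib_right sum.swap[of _ A])
  also have "\<dots> = (\<Sum>xs\<in>tuples (Suc n) A. \<Prod>x\<leftarrow>xs. f x)"
    by (simp add: sum_tuples_Suc[OF assms])
  finally show ?case .
qed simp

lemma tuples_append_bij: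
  "bij_betw (\<lambda>(xs, ys). xs @ ys) (tuples n A \<times> tuples k A) (tuples (n + k) A)"
proof (rule bij_betwI[where g = "\<lambda>zs. (take n zs, drop n zs)"])
  show "(\<lambda>zs. (take n zs, drop n zs)) \<in> tuples (n + k) A \<rightarrow> tuples n A \<times> tuples k A"
    unfolding tuples_def by (auto dest: in_set_takeD in_set_dropD)
qed (auto simp: tuples_def)

lemma sum_tuples_mult:
  fixes f g :: "'a list \<Rightarrow> 'b::comm_semiring_1"
  shows "(\<Sum>xs\<in>tuples n A. f xs) * (\<Sum>ys\<in>tuples k A. g ys) =
    (\<Sum>zs\<in>tuples (n + k) A. f (take n zs) * g (drop n zs))"
proof -
  have "(\<Sum>zs\<in>tuples (n + k) A. f (take n zs) * g (drop n zs))
      = (\<Sum>p\<in>tuples n A \<times> tuples k A. f (take n (fst p @ snd p)) * g (drop n (fst p @ snd p)))"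
    using sum.reindex_bij_betw[OF tuples_append_bij[of n A k], of "\<lambda>zs. f (take n zs) * g (drop n zs)"]
    by (simp add: case_prod_beta)
  also have "\<dots> = (\<Sum>p\<in>tuples n A \<times> tuples k A. f (fst p) * g (snd p))"
    by (intro sum.cong) (auto simp: tuples_def)
  finally show ?thesis
    by (simp add: sum_product sum.cartesian_product case_prod_beta)
qed

lemma tuples_image: "tuples n (f ` A) = map f ` tuples n A"
proof
  show "tuples n (f ` A) \<subseteq> map f ` tuples n A"
  proof
    fix xs assume xs: "xs \<in> tuples n (f ` A)"
    then have "xs \<in> lists (f ` A)"
      unfolding tuples_def by auto
    then obtain ys where "ys \<in> lists A" "xs = map f ys"
      by (auto simp: lists_image)
    with xs show "xs \<in> map f ` tuples n A"
      unfolding tuples_def by auto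
  qed
qed (auto simp: tuples_def intro!: imageI)

abbreviation signs :: "nat \<Rightarrow> int list set" where
  "signs n \<equiv> tuples n {-1, 1}"

lemma take_drop_tuples:
  "zs \<in> tuples (n + k) A \<Longrightarrow> take n zs \<in> tuples n A \<and> drop n zs \<in> tuples k A"
  unfolding tuples_def by (auto dest: in_set_takeD in_set_dropD)

section \<open>Signed sums\<close>

definition signed_sum :: "(nat \<Rightarrow> 'a::ring_1) \<Rightarrow> (int \<times> nat) list \<Rightarrow> 'a" where
  "signed_sum a ts = (\<Sum>x\<leftarrow>ts. of_int (fst x) * a (snd x))"

definition shift_indices :: "nat \<Rightarrow> (int \<times> nat) list \<Rightarrow> (int \<times> nat) list" where
  "shift_indices s ts = map (\<lambda>x. (fst x, snd x + s)) ts"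

definition is_signed :: "(int \<times> nat) list \<Rightarrow> bool" where
  "is_signed ts \<longleftrightarrow> fst ` set ts \<subseteq> {-1, 1}"

lemma signed_sum_Nil [simp]: "signed_sum a [] = 0"
  by (simp add: signed_sum_def)

lemma signed_sum_Cons [simp]: "signed_sum a (x # ts) = of_int (fst x) * a (snd x) + signed_sum a ts"
  by (simp add: signed_sum_def)

lemma signed_sum_append [simp]: "signed_sum a (ts @ us) = signed_sum a ts + signed_sum a us"
  by (simp add: signed_sum_def)

lemma signed_sum_filter_split:
  "signed_sum a ts = signed_sum a (filter P ts) + signed_sum a (filter (\<lambda>x. \<not> P x) ts)"
  by (induction ts) auto

lemma shift_indices_Nil [simp]: "shift_indices s [] = []"
  and shift_indices_Cons [simp]: "shift_indices s (x # ts) = (fst x, snd x + s) # shift_indices s ts"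
  and length_shift_indices [simp]: "length (shift_indices s ts) = length ts"
  and set_shift_indices: "set (shift_indices s ts) = (\<lambda>x. (fst x, snd x + s)) ` set ts"
  by (simp_all add: shift_indices_def)

lemma shift_indices_0 [simp]: "shift_indices 0 ts = ts"
  by (induction ts) auto

lemma filter_shift_indices:
  "filter P (shift_indices s ts) = shift_indices s (filter (\<lambda>x. P (fst x, snd x + s)) ts)"
  by (induction ts) auto

lemma is_signed_filter: "is_signed ts \<Longrightarrow> is_signed (filter P ts)"
  and is_signed_shift_indices [simp]: "is_signed (shift_indices s ts) \<longleftrightarrow> is_signed ts"
  and is_signed_append [simp]: "is_signed (ts @ us) \<longleftrightarrow> is_signed ts \<and> is_signed us"
  by (auto simp: is_signed_def set_shift_indices image_image)

lemma norm_signed_sum_le: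
  fixes b :: "nat \<Rightarrow> 'a::real_normed_algebra_1"
  assumes "is_signed ts" and "\<forall>x\<in>set ts. norm (b (snd x)) \<le> Y"
  shows "norm (signed_sum b ts) \<le> real (length ts) * Y"
  using assms
proof (induction ts)
  case (Cons x ts)
  have "norm (of_int (fst x) * b (snd x)) \<le> Y"
    using Cons.prems by (auto simp: is_signed_def norm_mult)
  then show ?case
    using Cons norm_triangle_le[of "of_int (fst x) * b (snd x)" "signed_sum b ts"]
    by (auto simp: is_signed_def algebra_simps)
qed simp

lemma signed_sum_powers_poly:
  "\<exists>P::int poly. \<forall>z::'a::comm_ring_1. poly (map_poly of_int P) z = signed_sum (\<lambda>k. z ^ k) ps"
proof (induction ps)
  case Nil
  show ?case by (intro exI[of _ 0]) simp
next
  case (Cons x ps)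
  then obtain P where "\<forall>z::'a. poly (map_poly of_int P) z = signed_sum (\<lambda>k. z ^ k) ps" by blast
  then show ?case
    by (intro exI[of _ "monom (fst x) (snd x) + P"])
       (simp add: map_poly_of_int_add map_poly_monom poly_monom)
qed

lemma signed_sum_of_int: "signed_sum (\<lambda>k. of_int (A k)) ts = of_int (signed_sum A ts)"
  by (induction ts) auto

lemma is_signed_zip: "es \<in> signs n \<Longrightarrow> is_signed (zip es xs)"
  unfolding is_signed_def tuples_def by (auto dest: set_zip_leftD)

lemma signed_sum_cong: "(\<And>x. x \<in> set ts \<Longrightarrow> b (snd x) = b' (snd x)) \<Longrightarrow> signed_sum b ts = signed_sum b' ts"
  by (induction ts) auto

lemma zip_map_add: "zip es (map (\<lambda>k. k + s) xs) = shift_indices s (zip es xs)"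
  by (simp add: zip_map2 shift_indices_def case_prod_beta)

lemma exists_empty_window:
  fixes R :: "nat \<Rightarrow> nat" and K :: "nat set"
  assumes R: "\<And>i. R i \<le> R (Suc i)" and K: "finite K" "card K \<le> M" "kmax \<in> K" "\<forall>k\<in>K. k \<le> kmax"
  shows "\<exists>i<M. \<forall>k\<in>K. \<not> (kmax \<le> k + R (Suc i) \<and> k + R i < kmax)"
proof (rule ccontr)
  assume "\<not> ?thesis"
  then obtain f where f: "\<And>i. i < M \<Longrightarrow> f i \<in> K \<and> kmax \<le> f i + R (Suc i) \<and> f i + R i < kmax"
    by metis
  have decreasing: "f j < f i" if "i < j" "j < M" for i j
    using f[of i] f[of j] that lift_Suc_mono_le[of R, OF R, of "Suc i" j] by linarith
  have "inj_on f {..<M}"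
  proof (rule inj_onI)
    fix i j assume "i \<in> {..<M}" "j \<in> {..<M}" "f i = f j"
    then show "i = j"
      using decreasing[of i j] decreasing[of j i] by (cases i j rule: linorder_cases) auto
  qed
  then have "M = card (f ` {..<M})"
    by (simp add: card_image)
  also have "\<dots> \<le> card (K - {kmax})"
    using f K(1) by (intro card_mono) fastforce+
  also have "\<dots> = card K - 1"
    using K(3) by simp
  moreover have "card K > 0"
    using K(1,3) card_gt_0_iff by blast
  ultimately show False
    using K(2) by linarith
qed

lemma exists_top_block:
  fixes R E :: "nat \<Rightarrow> nat" and K :: "nat set"
  assumes R: "\<And>i. R (Suc i) = R i + E i" and K: "finite K" "K \<noteq> {}" "card K \<le> M"
  obtains i Kb where "i < M" "Kb \<in> K" "\<forall>k\<in>K. k \<le> Kb + R i"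
    "\<forall>k\<in>K. k < Kb \<longrightarrow> k + E i \<le> Kb"
proof -
  define kmax where "kmax = Max K"
  have kmax: "kmax \<in> K" "\<forall>k\<in>K. k \<le> kmax"
    using K by (simp_all add: kmax_def)
  obtain i where i: "i < M" and empty: "\<forall>k\<in>K. \<not> (kmax \<le> k + R (Suc i) \<and> k + R i < kmax)"
    using exists_empty_window[of R K M kmax] R K kmax by auto
  define Kb where "Kb = Min {k\<in>K. kmax \<le> k + R i}"
  have "Kb \<in> {k\<in>K. kmax \<le> k + R i}"
    unfolding Kb_def using K(1) kmax(1) by (intro Min_in) auto
  then have top: "Kb \<in> K" "kmax \<le> Kb + R i"
    by auto
  have "k + E i \<le> Kb" if "k \<in> K" "k < Kb" for k
  proof -
    have "k + R i < kmax"
      using that K(1) Min_le[of "{k\<in>K. kmax \<le> k + R i}" k] unfolding Kb_def by fastforce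
    then show ?thesis
      using empty that(1) top(2) R[of i] by fastforce
  qed
  with i top kmax(2) show ?thesis
    using that by fastforce
qed

section \<open>Signed sums of a sequence with a dominant root\<close>

locale dominant_root_seq =
  fixes d :: nat and lam c :: "nat \<Rightarrow> complex" and lr :: real
  assumes lam1: "lam 1 = of_real lr" and lr_gt_1: "1 < lr"
    and dominant: "\<forall>l\<in>{2..d}. cmod (lam l) < lr" and c1_nz: "c 1 \<noteq> 0" and d_pos: "1 \<le> d"
    and conjugate_roots: "\<And>q l. poly (map_poly of_int q) (lam 1) = 0 \<Longrightarrow> l \<in> {1..d} \<Longrightarrow>
      poly (map_poly of_int q) (lam l) = 0"
begin

abbreviation "a \<equiv> lin_rec_seq d c lam"

definition "coeff_norm = (\<Sum>l=1..d. cmod (c l))"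

definition "subdominant = Max (insert 0 ((\<lambda>l. cmod (lam l)) ` {2..d}))"

lemma coeff_norm_nonneg: "0 \<le> coeff_norm"
  unfolding coeff_norm_def by (intro sum_nonneg) auto

lemma subdominant_nonneg: "0 \<le> subdominant"
  and norm_lam_le_subdominant: "l \<in> {2..d} \<Longrightarrow> cmod (lam l) \<le> subdominant"
  unfolding subdominant_def by (rule Max_ge; simp)+

lemma subdominant_less: "subdominant < lr"
  unfolding subdominant_def using dominant lr_gt_1 by (auto simp: Max_less_iff)

lemma norm_lam_le: "l \<in> {1..d} \<Longrightarrow> cmod (lam l) \<le> lr"
  using lam1 lr_gt_1 norm_lam_le_subdominant[of l] subdominant_less
  by (cases "l = 1") auto

lemma norm_a_le: "cmod (a k) \<le> coeff_norm * lr ^ k"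
proof -
  have "cmod (a k) \<le> (\<Sum>l=1..d. cmod (c l * lam l ^ k))"
    unfolding lin_rec_seq_def by (rule norm_sum)
  also have "\<dots> \<le> (\<Sum>l=1..d. cmod (c l) * lr ^ k)"
    by (intro sum_mono) (auto simp: norm_mult norm_power intro!: mult_left_mono power_mono norm_lam_le)
  finally show ?thesis
    by (simp add: coeff_norm_def sum_distrib_right)
qed

lemma signed_sum_shift_indices:
  "signed_sum a (shift_indices K ps) = (\<Sum>l=1..d. c l * lam l ^ K * signed_sum (\<lambda>k. lam l ^ k) ps)"
  by (induction ps) (simp_all add: lin_rec_seq_def sum_distrib_left sum.distrib power_add algebra_simps)

lemma signed_sum_powers_conjugates:
  "signed_sum (\<lambda>k. lam 1 ^ k) ps = 0 \<Longrightarrow> l \<in> {1..d} \<Longrightarrow> signed_sum (\<lambda>k. lam l ^ k) ps = 0"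
  using signed_sum_powers_poly[of ps] conjugate_roots by metis

lemma norm_subdominant_part_le:
  assumes Q: "\<forall>l\<in>{2..d}. cmod (Q l) \<le> W" and W: "0 \<le> W"
  shows "cmod (\<Sum>l=2..d. c l * lam l ^ K * Q l) \<le> coeff_norm * W * subdominant ^ K"
proof -
  have "cmod (\<Sum>l=2..d. c l * lam l ^ K * Q l) \<le> (\<Sum>l=2..d. cmod (c l) * (W * subdominant ^ K))"
    using Q W norm_lam_le_subdominant
    by (intro order_trans[OF norm_sum] sum_mono)
       (auto simp: norm_mult norm_power mult_ac intro!: mult_left_mono mult_mono power_mono)
  also have "\<dots> \<le> (\<Sum>l=1..d. cmod (c l)) * (W * subdominant ^ K)"
    unfolding sum_distrib_right[symmetric] using W subdominant_nonneg
    by (intro mult_right_mono sum_mono2) auto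
  finally show ?thesis
    by (simp add: coeff_norm_def mult_ac)
qed

lemma dominant_part_eventually_wins:
  assumes \<delta>: "\<delta> > 0" and W: "0 \<le> W"
  obtains K0 where "\<And>K Q. K0 \<le> K \<Longrightarrow> \<delta> \<le> cmod (Q 1) \<Longrightarrow> \<forall>l\<in>{2..d}. cmod (Q l) \<le> W \<Longrightarrow>
    cmod (c 1) * \<delta> / 2 * lr ^ K \<le> cmod (\<Sum>l=1..d. c l * lam l ^ K * Q l)"
proof -
  define \<epsilon> where "\<epsilon> = cmod (c 1) * \<delta> / 2"
  have "\<epsilon> > 0"
    using \<delta> c1_nz by (simp add: \<epsilon>_def)
  have "(\<lambda>K. coeff_norm * W * (subdominant / lr) ^ K) \<longlonglongrightarrow> 0"
    using subdominant_nonneg subdominant_less lr_gt_1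
    by (intro tendsto_mult_right_zero LIMSEQ_power_zero) auto
  from order_tendstoD(2)[OF this \<open>\<epsilon> > 0\<close>]
  obtain K0 where K0: "\<And>K. K0 \<le> K \<Longrightarrow> coeff_norm * W * (subdominant / lr) ^ K < \<epsilon>"
    by (auto simp: eventually_sequentially)
  show thesis
  proof (rule that)
    fix K Q assume K: "K0 \<le> K" and Q1: "\<delta> \<le> cmod (Q 1)" and Q: "\<forall>l\<in>{2..d}. cmod (Q l) \<le> W"
    have "cmod (\<Sum>l=2..d. c l * lam l ^ K * Q l) \<le> coeff_norm * W * (subdominant / lr) ^ K * lr ^ K"
      using norm_subdominant_part_le[OF Q W, of K] lr_gt_1 by (simp add: power_divide)
    also have "\<dots> \<le> \<epsilon> * lr ^ K"
      using K0[OF K] lr_gt_1 by (intro mult_right_mono) auto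
    finally have tail: "cmod (\<Sum>l=2..d. c l * lam l ^ K * Q l) \<le> \<epsilon> * lr ^ K" .
    have "2 * \<epsilon> * lr ^ K = cmod (c 1) * lr ^ K * \<delta>"
      by (simp add: \<epsilon>_def)
    also have "\<dots> \<le> cmod (c 1) * lr ^ K * cmod (Q 1)"
      using Q1 lr_gt_1 by (intro mult_left_mono) auto
    also have "\<dots> = cmod (c 1 * lam 1 ^ K * Q 1)"
      using lam1 lr_gt_1 by (simp add: norm_mult norm_power)
    finally have head: "2 * \<epsilon> * lr ^ K \<le> cmod (c 1 * lam 1 ^ K * Q 1)" .
    have "(\<Sum>l=1..d. c l * lam l ^ K * Q l) = c 1 * lam 1 ^ K * Q 1 + (\<Sum>l=2..d. c l * lam l ^ K * Q l)"
      using d_pos by (simp add: sum.atLeast_Suc_atMost numeral_2_eq_2)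
    then show "cmod (c 1) * \<delta> / 2 * lr ^ K \<le> cmod (\<Sum>l=1..d. c l * lam l ^ K * Q l)"
      using head tail
        norm_triangle_ineq4[of "\<Sum>l=1..d. c l * lam l ^ K * Q l" "\<Sum>l=2..d. c l * lam l ^ K * Q l"]
      by (simp add: \<epsilon>_def)
  qed
qed

definition separated :: "nat \<Rightarrow> nat \<Rightarrow> real \<Rightarrow> nat \<Rightarrow> bool" where
  "separated M D \<delta> K0 \<longleftrightarrow> \<delta> > 0 \<and>
    (\<forall>ps. length ps \<le> M \<longrightarrow> is_signed ps \<longrightarrow> (\<forall>x\<in>set ps. snd x \<le> D) \<longrightarrow>
      (\<forall>K. signed_sum a (shift_indices K ps) = 0) \<or>
      (\<forall>K\<ge>K0. \<delta> * lr ^ K \<le> cmod (signed_sum a (shift_indices K ps))))"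

lemma norm_signed_sum_powers_le:
  assumes "length ps \<le> M" "is_signed ps" "\<forall>x\<in>set ps. snd x \<le> D" "l \<in> {1..d}"
  shows "cmod (signed_sum (\<lambda>k. lam l ^ k) ps) \<le> real M * lr ^ D"
proof -
  have lam_le: "cmod (lam l ^ k) \<le> lr ^ D" if "k \<le> D" for k
    using norm_lam_le[OF assms(4)] lr_gt_1 that
    by (simp add: norm_power order_trans[OF power_mono power_increasing])
  have "cmod (signed_sum (\<lambda>k. lam l ^ k) ps) \<le> length ps * lr ^ D"
    by (rule norm_signed_sum_le[OF assms(2)]) (use lam_le assms(3) in auto)
  also have "\<dots> \<le> real M * lr ^ D"
    using assms(1) lr_gt_1 by (intro mult_right_mono) auto
  finally show ?thesis .
qed

lemma exists_min_norm_signed_sum_powers: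
  "\<exists>\<delta>>0. \<forall>ps. length ps \<le> M \<longrightarrow> is_signed ps \<longrightarrow> (\<forall>x\<in>set ps. snd x \<le> D) \<longrightarrow>
    signed_sum (\<lambda>k. lam 1 ^ k) ps \<noteq> 0 \<longrightarrow> \<delta> \<le> cmod (signed_sum (\<lambda>k. lam 1 ^ k) ps)"
proof -
  let ?Q = "\<lambda>ps. signed_sum (\<lambda>k. lam 1 ^ k) ps"
  define pats where "pats = {ps :: (int \<times> nat) list. set ps \<subseteq> {-1, 1} \<times> {0..D} \<and> length ps \<le> M}"
  have "finite pats"
    unfolding pats_def by (intro finite_lists_length_le) auto
  define Z where "Z = insert 1 ((\<lambda>ps. cmod (?Q ps)) ` {ps\<in>pats. ?Q ps \<noteq> 0})"
  have "finite Z"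
    unfolding Z_def using \<open>finite pats\<close> by auto
  then have "Min Z > 0"
    by (auto simp: Z_def Min_gr_iff)
  moreover have "Min Z \<le> cmod (?Q ps)" if "ps \<in> pats" "?Q ps \<noteq> 0" for ps
    using \<open>finite Z\<close> that by (auto simp: Z_def intro: Min_le)
  moreover have "ps \<in> pats" if "length ps \<le> M" "is_signed ps" "\<forall>x\<in>set ps. snd x \<le> D" for ps
    using that unfolding pats_def is_signed_def by fastforce
  ultimately show ?thesis
    by blast
qed

lemma exists_separated: "\<exists>\<delta> K0. separated M D \<delta> K0"
proof -
  obtain \<delta>0 where \<delta>0: "\<delta>0 > 0" and \<delta>0_le: "\<And>ps. length ps \<le> M \<Longrightarrow> is_signed ps \<Longrightarrow>
      \<forall>x\<in>set ps. snd x \<le> D \<Longrightarrow> signed_sum (\<lambda>k. lam 1 ^ k) ps \<noteq> 0 \<Longrightarrow>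
      \<delta>0 \<le> cmod (signed_sum (\<lambda>k. lam 1 ^ k) ps)"
    using exists_min_norm_signed_sum_powers[of M D] by blast
  have "0 \<le> real M * lr ^ D"
    using lr_gt_1 by simp
  then obtain K0 where K0: "\<And>K Q. K0 \<le> K \<Longrightarrow> \<delta>0 \<le> cmod (Q 1) \<Longrightarrow>
      \<forall>l\<in>{2..d}. cmod (Q l) \<le> real M * lr ^ D \<Longrightarrow>
      cmod (c 1) * \<delta>0 / 2 * lr ^ K \<le> cmod (\<Sum>l=1..d. c l * lam l ^ K * Q l)"
    using dominant_part_eventually_wins[OF \<delta>0] by blast
  have "separated M D (cmod (c 1) * \<delta>0 / 2) K0"
    unfolding separated_def
  proof (intro conjI allI impI)
    show "cmod (c 1) * \<delta>0 / 2 > 0"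
      using c1_nz \<delta>0 by simp
    fix ps :: "(int \<times> nat) list"
    assume ps: "length ps \<le> M" "is_signed ps" "\<forall>x\<in>set ps. snd x \<le> D"
    show "(\<forall>K. signed_sum a (shift_indices K ps) = 0) \<or>
      (\<forall>K\<ge>K0. cmod (c 1) * \<delta>0 / 2 * lr ^ K \<le> cmod (signed_sum a (shift_indices K ps)))"
    proof (cases "signed_sum (\<lambda>k. lam 1 ^ k) ps = 0")
      case True
      then show ?thesis
        using signed_sum_powers_conjugates by (simp add: signed_sum_shift_indices)
    next
      case False
      then show ?thesis
        using K0[of _ "\<lambda>l. signed_sum (\<lambda>k. lam l ^ k) ps"] \<delta>0_le[OF ps]
          norm_signed_sum_powers_le[OF ps] d_pos
        by (simp add: signed_sum_shift_indices)
    qed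
  qed
  then show ?thesis
    by blast
qed

definition "sep_bound M D = fst (SOME p. separated M D (fst p) (snd p))"

definition "sep_start M D = snd (SOME p. separated M D (fst p) (snd p))"

lemma separated_sep: "separated M D (sep_bound M D) (sep_start M D)"
  unfolding sep_bound_def sep_start_def
  using someI_ex[of "\<lambda>p. separated M D (fst p) (snd p)"] exists_separated by auto

definition "gap_len M D = (LEAST E. real M * coeff_norm < sep_bound M D * lr ^ E)"

lemma gap_len: "real M * coeff_norm < sep_bound M D * lr ^ gap_len M D"
proof -
  have "sep_bound M D > 0"
    using separated_sep unfolding separated_def by blast
  moreover obtain E where "real M * coeff_norm / sep_bound M D < lr ^ E"
    using real_arch_pow[OF lr_gt_1] by blast
  ultimately have "real M * coeff_norm < sep_bound M D * lr ^ E"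
    by (simp add: field_simps)
  then show ?thesis
    unfolding gap_len_def by (rule LeastI)
qed

text \<open>
  Below the top index of a pattern, the windows between the radii \<open>radius M i\<close> and
  \<open>radius M (Suc i)\<close> are \<open>gap_len\<close> long; by pigeonhole one of the first M windows contains no
  index, and the indices above it form a block whose signed sum dominates that of the rest.
\<close>

primrec radius :: "nat \<Rightarrow> nat \<Rightarrow> nat" where
  "radius M 0 = 0"
| "radius M (Suc i) = radius M i + gap_len M (radius M i)"

text \<open>The \<open>Suc\<close> keeps index sets above the threshold inside {1..}.\<close>

definition "shift_threshold M = Suc (\<Sum>i<M. sep_start M (radius M i))"

definition "split_gap M = shift_threshold M + radius M M + 1"

lemma radius_mono: "i \<le> j \<Longrightarrow> radius M i \<le> radius M j"
  using lift_Suc_mono_le[of "radius M"] by simp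

lemma norm_signed_sum_below_lt:
  assumes "is_signed rs" "length rs \<le> M" "\<forall>x\<in>set rs. snd x + gap_len M D \<le> Kb"
  shows "cmod (signed_sum a rs) < sep_bound M D * lr ^ Kb"
proof -
  let ?E = "gap_len M D"
  have a_le: "cmod (a k) \<le> coeff_norm * (lr ^ Kb / lr ^ ?E)" if "k + ?E \<le> Kb" for k
  proof -
    have "lr ^ k * lr ^ ?E \<le> lr ^ Kb"
      using that lr_gt_1 by (simp flip: power_add add: power_increasing)
    then have "lr ^ k \<le> lr ^ Kb / lr ^ ?E"
      using lr_gt_1 by (simp add: field_simps)
    then show ?thesis
      using norm_a_le[of k] coeff_norm_nonneg by (meson mult_left_mono order_trans)
  qed
  have "cmod (signed_sum a rs) \<le> length rs * (coeff_norm * (lr ^ Kb / lr ^ ?E))"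
    by (rule norm_signed_sum_le[OF assms(1)]) (use a_le assms(3) in auto)
  also have "\<dots> \<le> (real M * coeff_norm) * (lr ^ Kb / lr ^ ?E)"
    using assms(2) coeff_norm_nonneg lr_gt_1 unfolding mult.assoc by (intro mult_right_mono) auto
  also have "\<dots> < (sep_bound M D * lr ^ ?E) * (lr ^ Kb / lr ^ ?E)"
    using gap_len lr_gt_1 by (intro mult_strict_right_mono) auto
  also have "\<dots> = sep_bound M D * lr ^ Kb"
    using lr_gt_1 by simp
  finally show ?thesis .
qed

lemma signed_sum_block_dichotomy:
  assumes "length bs \<le> M" "is_signed bs" "\<forall>x\<in>set bs. Kb \<le> snd x \<and> snd x \<le> Kb + D"
    and "sep_start M D \<le> Kb"
  shows "(\<forall>s. signed_sum a (shift_indices s bs) = 0) \<or>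
    (\<forall>s. sep_bound M D * lr ^ (Kb + s) \<le> cmod (signed_sum a (shift_indices s bs)))"
proof -
  define ps where "ps = map (\<lambda>x. (fst x, snd x - Kb)) bs"
  have "shift_indices s bs = shift_indices (Kb + s) ps" for s
    using assms(3) unfolding ps_def by (induction bs) auto
  moreover have "length ps \<le> M" "is_signed ps" "\<forall>x\<in>set ps. snd x \<le> D"
    using assms(1-3) unfolding ps_def is_signed_def by auto
  ultimately show ?thesis
    using separated_sep[of M D] assms(4) unfolding separated_def by auto
qed

lemma signed_sum_top_block:
  assumes ts: "length ts \<le> M" "is_signed ts"
    and span: "\<forall>x\<in>set ts. snd x \<le> Kb + radius M i"
    and gap: "\<forall>x\<in>set ts. snd x < Kb \<longrightarrow> snd x + gap_len M (radius M i) \<le> Kb"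
    and start: "sep_start M (radius M i) \<le> Kb"
  defines "upper \<equiv> filter (\<lambda>x. Kb \<le> snd x) ts" and "lower \<equiv> filter (\<lambda>x. snd x < Kb) ts"
  shows "signed_sum a ts = 0 \<longleftrightarrow> signed_sum a upper = 0 \<and> signed_sum a lower = 0"
    and "signed_sum a (shift_indices s upper) = 0 \<longleftrightarrow> signed_sum a upper = 0"
proof -
  let ?\<delta> = "sep_bound M (radius M i)"
  have "length upper \<le> M" "length lower \<le> M" "is_signed upper" "is_signed lower"
    using ts by (auto simp: upper_def lower_def is_signed_filter order_trans[OF length_filter_le])
  then have dichotomy: "(\<forall>s. signed_sum a (shift_indices s upper) = 0) \<or>
      (\<forall>s. ?\<delta> * lr ^ (Kb + s) \<le> cmod (signed_sum a (shift_indices s upper)))"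
    and lower_small: "cmod (signed_sum a lower) < ?\<delta> * lr ^ Kb"
    using span gap start unfolding upper_def lower_def
    by (intro signed_sum_block_dichotomy norm_signed_sum_below_lt; auto)+
  have split: "signed_sum a ts = signed_sum a upper + signed_sum a lower"
    unfolding upper_def lower_def
    by (subst signed_sum_filter_split[of _ _ "\<lambda>x. Kb \<le> snd x"]) (simp add: not_le)
  have "(signed_sum a ts = 0 \<longleftrightarrow> signed_sum a upper = 0 \<and> signed_sum a lower = 0) \<and>
      (signed_sum a (shift_indices s upper) = 0 \<longleftrightarrow> signed_sum a upper = 0)"
    using dichotomy
  proof (elim disjE)
    assume "\<forall>s. signed_sum a (shift_indices s upper) = 0"
    then show ?thesis
      using split by (metis add_0 shift_indices_0)
  next
    assume big: "\<forall>s. ?\<delta> * lr ^ (Kb + s) \<le> cmod (signed_sum a (shift_indices s upper))"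
    have "?\<delta> > 0"
      using separated_sep unfolding separated_def by blast
    have upper_nz: "signed_sum a (shift_indices s upper) \<noteq> 0" for s
    proof -
      have "0 < ?\<delta> * lr ^ (Kb + s)"
        using \<open>?\<delta> > 0\<close> lr_gt_1 by simp
      also have "\<dots> \<le> cmod (signed_sum a (shift_indices s upper))"
        using big by blast
      finally show ?thesis
        by simp
    qed
    have "signed_sum a ts \<noteq> 0"
      using big[rule_format, of 0] lower_small split
      by (metis add.inverse_unique norm_minus_cancel not_less add_0_right shift_indices_0)
    then show ?thesis
      using upper_nz[of s] upper_nz[of 0] by auto
  qed
  then show "signed_sum a ts = 0 \<longleftrightarrow> signed_sum a upper = 0 \<and> signed_sum a lower = 0"
    and "signed_sum a (shift_indices s upper) = 0 \<longleftrightarrow> signed_sum a upper = 0"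
    by auto
qed

lemma sep_start_le_shift_threshold: "i < M \<Longrightarrow> sep_start M (radius M i) \<le> shift_threshold M"
  unfolding shift_threshold_def by (intro le_SucI member_le_sum) auto

lemma exists_top_block_pattern:
  assumes "ts \<noteq> []" "length ts \<le> M"
  obtains i Kb where "i < M" "Kb \<in> snd ` set ts" "\<forall>x\<in>set ts. snd x \<le> Kb + radius M i"
    "\<forall>x\<in>set ts. snd x < Kb \<longrightarrow> snd x + gap_len M (radius M i) \<le> Kb"
proof -
  have "card (snd ` set ts) \<le> M"
    using card_image_le[OF finite_set, of snd ts] card_length[of ts] assms(2) by linarith
  then show ?thesis
    using exists_top_block[of "radius M" "\<lambda>i. gap_len M (radius M i)" "snd ` set ts" M] assms(1) that
    by auto
qed

lemma signed_sum_shift_invariant: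
  assumes "length ts \<le> M" "is_signed ts" "\<forall>x\<in>set ts. shift_threshold M \<le> snd x"
  shows "signed_sum a (shift_indices s ts) = 0 \<longleftrightarrow> signed_sum a ts = 0"
  using assms
proof (induction "length ts" arbitrary: ts rule: less_induct)
  case less
  show ?case
  proof (cases "ts = []")
    case False
    then obtain i Kb where i: "i < M" and Kb: "Kb \<in> snd ` set ts"
      and span: "\<forall>x\<in>set ts. snd x \<le> Kb + radius M i"
      and gap: "\<forall>x\<in>set ts. snd x < Kb \<longrightarrow> snd x + gap_len M (radius M i) \<le> Kb"
      using exists_top_block_pattern less.prems(1) by blast
    have start: "sep_start M (radius M i) \<le> Kb"
      using sep_start_le_shift_threshold[OF i] Kb less.prems(3) by fastforce
    define upper where "upper = filter (\<lambda>x. Kb \<le> snd x) ts"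
    define rest where "rest = filter (\<lambda>x. snd x < Kb) ts"
    note block = signed_sum_top_block[OF less.prems(1,2) span gap start]
    have "signed_sum a (shift_indices s ts) = 0 \<longleftrightarrow>
        signed_sum a (shift_indices s upper) = 0 \<and> signed_sum a (shift_indices s rest) = 0"
      using signed_sum_top_block(1)[of "shift_indices s ts" M "Kb + s" i] less.prems(1,2) span gap start
      by (simp add: set_shift_indices filter_shift_indices upper_def rest_def)
    moreover have "length rest < length ts"
      using Kb unfolding rest_def by (force intro: length_filter_less)
    then have "signed_sum a (shift_indices s rest) = 0 \<longleftrightarrow> signed_sum a rest = 0"
      by (rule less.hyps)
        (use less.prems in \<open>auto simp: rest_def intro: is_signed_filter order_trans[OF length_filter_le]\<close>)
    ultimately show ?thesis
      using block unfolding upper_def rest_def by blast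
  qed simp
qed

lemma signed_sum_upper_part_zero:
  assumes "length ts \<le> M" "is_signed ts" "\<forall>x\<in>set ts. snd x \<le> r \<or> r + split_gap M \<le> snd x"
    and "signed_sum a ts = 0"
  shows "signed_sum a (filter (\<lambda>x. r + split_gap M \<le> snd x) ts) = 0"
  using assms
proof (induction "length ts" arbitrary: ts rule: less_induct)
  case less
  define high where "high = (\<lambda>x::int \<times> nat. r + split_gap M \<le> snd x)"
  show ?case
  proof (cases "filter high ts = []")
    case False
    then obtain y where y: "y \<in> set ts" "high y"
      by (auto simp: filter_empty_conv)
    then obtain i Kb where i: "i < M" and Kb: "Kb \<in> snd ` set ts"
      and span: "\<forall>x\<in>set ts. snd x \<le> Kb + radius M i"
      and gap: "\<forall>x\<in>set ts. snd x < Kb \<longrightarrow> snd x + gap_len M (radius M i) \<le> Kb"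
      using exists_top_block_pattern less.prems(1) by (metis empty_iff list.set(1))
    have "radius M i \<le> radius M M"
      using i by (intro radius_mono) simp
    then have "r + shift_threshold M < Kb"
      using span y unfolding high_def split_gap_def by fastforce
    then have Kb_high: "r + split_gap M \<le> Kb"
      using Kb less.prems(3) by fastforce
    have start: "sep_start M (radius M i) \<le> Kb"
      using sep_start_le_shift_threshold[OF i] Kb_high unfolding split_gap_def by linarith
    define upper where "upper = filter (\<lambda>x. Kb \<le> snd x) ts"
    define rest where "rest = filter (\<lambda>x. snd x < Kb) ts"
    have zero: "signed_sum a upper = 0" "signed_sum a rest = 0"
      using signed_sum_top_block(1)[OF less.prems(1,2) span gap start] less.prems(4)
      unfolding upper_def rest_def by auto
    have "length rest < length ts"
      using Kb unfolding rest_def by (force intro: length_filter_less)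
    then have rest_high: "signed_sum a (filter high rest) = 0"
      unfolding high_def
      by (rule less.hyps) (use less.prems zero(2) in
          \<open>auto simp: rest_def high_def intro: is_signed_filter order_trans[OF length_filter_le]\<close>)
    have "signed_sum a (filter high ts) = signed_sum a (filter (\<lambda>x. Kb \<le> snd x) (filter high ts))
        + signed_sum a (filter (\<lambda>x. \<not> Kb \<le> snd x) (filter high ts))"
      by (rule signed_sum_filter_split)
    also have "filter (\<lambda>x. Kb \<le> snd x) (filter high ts) = upper"
      unfolding upper_def high_def using Kb_high by (auto simp: filter_filter intro: filter_cong)
    also have "filter (\<lambda>x. \<not> Kb \<le> snd x) (filter high ts) = filter high rest"
      unfolding rest_def by (simp add: filter_filter not_le conj_commute)
    finally have "signed_sum a (filter high ts) = 0"
      using zero(1) rest_high by simp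
    then show ?thesis
      unfolding high_def .
  qed (simp add: high_def)
qed


lemma signed_sum_append_eq_0_iff:
  assumes "length (ts @ us) \<le> M" "is_signed ts" "is_signed us"
    and "\<forall>x\<in>set ts. snd x \<le> r" "\<forall>x\<in>set us. r + split_gap M \<le> snd x"
  shows "signed_sum a (ts @ us) = 0 \<longleftrightarrow> signed_sum a ts = 0 \<and> signed_sum a us = 0"
proof -
  have "split_gap M \<ge> 1"
    by (simp add: split_gap_def)
  then have "filter (\<lambda>x. r + split_gap M \<le> snd x) ts = []"
    using assms(4) by (intro filter_False) auto
  moreover have "filter (\<lambda>x. r + split_gap M \<le> snd x) us = us"
    using assms(5) by (intro filter_True) auto
  ultimately have "filter (\<lambda>x. r + split_gap M \<le> snd x) (ts @ us) = us"
    by simp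
  moreover have "\<forall>x\<in>set (ts @ us). snd x \<le> r \<or> r + split_gap M \<le> snd x"
    using assms(4,5) by auto
  ultimately show ?thesis
    using signed_sum_upper_part_zero[of "ts @ us" M r] assms(1-3) by auto
qed

end

section \<open>Smooth functions and logarithmic derivatives\<close>

lemma sum_binomial_Suc_step:
  fixes u v :: "nat \<Rightarrow> 'a::comm_semiring_1"
  shows "(\<Sum>i\<le>n. of_nat (n choose i) * (u i * v (Suc (n - i)) + u (Suc i) * v (n - i)))
    = (\<Sum>i\<le>Suc n. of_nat (Suc n choose i) * (u i * v (Suc n - i)))"
proof -
  have shift: "(\<Sum>i\<le>n. of_nat (n choose i) * (u i * v (Suc (n - i))))
      = u 0 * v (Suc n) + (\<Sum>i\<le>n. of_nat (n choose Suc i) * (u (Suc i) * v (n - i)))"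
  proof -
    have "(\<Sum>i\<le>n. of_nat (n choose i) * (u i * v (Suc (n - i))))
        = (\<Sum>i\<le>Suc n. of_nat (n choose i) * (u i * v (Suc n - i)))"
      by (simp add: Suc_diff_le binomial_eq_0)
    also have "\<dots> = u 0 * v (Suc n) + (\<Sum>i\<le>n. of_nat (n choose Suc i) * (u (Suc i) * v (n - i)))"
      by (subst sum.atMost_Suc_shift) simp
    finally show ?thesis .
  qed
  have "(\<Sum>i\<le>Suc n. of_nat (Suc n choose i) * (u i * v (Suc n - i)))
      = u 0 * v (Suc n) + (\<Sum>i\<le>n. of_nat (Suc n choose Suc i) * (u (Suc i) * v (n - i)))"
    by (subst sum.atMost_Suc_shift) simp
  also have "\<dots> = (\<Sum>i\<le>n. of_nat (n choose i) * (u (Suc i) * v (n - i)))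
      + (\<Sum>i\<le>n. of_nat (n choose i) * (u i * v (Suc (n - i))))"
    unfolding shift by (simp add: sum.distrib algebra_simps)
  finally show ?thesis
    by (simp add: sum.distrib algebra_simps)
qed

definition differentiable_upto :: "nat \<Rightarrow> (real \<Rightarrow> real) \<Rightarrow> bool" where
  "differentiable_upto n f \<longleftrightarrow> (\<forall>k\<le>n. \<forall>x. (deriv ^^ k) f differentiable at x)"

definition smooth :: "(real \<Rightarrow> real) \<Rightarrow> bool" where
  "smooth f \<longleftrightarrow> (\<forall>n. differentiable_upto n f)"

lemma has_real_derivative_higher_deriv:
  "differentiable_upto n f \<Longrightarrow> k \<le> n \<Longrightarrow>
    ((deriv ^^ k) f has_real_derivative (deriv ^^ Suc k) f x) (at x)"
  unfolding differentiable_upto_def by (auto simp flip: DERIV_deriv_iff_real_differentiable)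

lemma differentiable_upto_Suc:
  "differentiable_upto (Suc n) f \<longleftrightarrow> (\<forall>x. f differentiable at x) \<and> differentiable_upto n (deriv f)"
proof -
  have "(deriv ^^ k) (deriv f) = (deriv ^^ Suc k) f" for k
    by (simp only: funpow_Suc_right o_def)
  then show ?thesis
    unfolding differentiable_upto_def
    by (metis funpow_0 le_Suc_eq not0_implies_Suc Suc_le_mono zero_le)
qed

lemma smooth_imp_differentiable_upto: "smooth f \<Longrightarrow> differentiable_upto n f"
  unfolding smooth_def by blast

lemma smooth_has_real_derivative: "smooth f \<Longrightarrow> (f has_real_derivative deriv f x) (at x)"
  using has_real_derivative_higher_deriv[OF smooth_imp_differentiable_upto, of f 0 0] by simp

lemma smooth_iff_deriv: "smooth f \<longleftrightarrow> (\<forall>x. f differentiable at x) \<and> smooth (deriv f)"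
  unfolding smooth_def
  by (metis differentiable_upto_Suc differentiable_upto_def le_SucI)

lemma higher_deriv_add_smooth:
  assumes "smooth f" "smooth g"
  shows "(deriv ^^ k) (\<lambda>x. f x + g x) = (\<lambda>x. (deriv ^^ k) f x + (deriv ^^ k) g x)"
proof (induction k)
  case (Suc k)
  have "((\<lambda>x. (deriv ^^ k) f x + (deriv ^^ k) g x) has_real_derivative
      (deriv ^^ Suc k) f x + (deriv ^^ Suc k) g x) (at x)" for x
    using assms
    by (intro DERIV_add has_real_derivative_higher_deriv smooth_imp_differentiable_upto) auto
  then show ?case
    using Suc by (auto intro: DERIV_imp_deriv)
qed simp

lemma higher_deriv_uminus_smooth:
  assumes "smooth f"
  shows "(deriv ^^ k) (\<lambda>x. - f x) = (\<lambda>x. - (deriv ^^ k) f x)"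
proof (induction k)
  case (Suc k)
  have "((\<lambda>x. - (deriv ^^ k) f x) has_real_derivative - (deriv ^^ Suc k) f x) (at x)" for x
    using assms
    by (intro DERIV_minus has_real_derivative_higher_deriv smooth_imp_differentiable_upto) auto
  then show ?case
    using Suc by (auto intro: DERIV_imp_deriv)
qed simp

lemma smooth_uminus: "smooth f \<Longrightarrow> smooth (\<lambda>x. - f x)"
  unfolding smooth_def differentiable_upto_def
  by (simp add: higher_deriv_uminus_smooth[unfolded smooth_def differentiable_upto_def]
      differentiable_minus)

lemma higher_deriv_mult_upto:
  assumes "differentiable_upto n f" "differentiable_upto n g" "k \<le> n"
  shows "(deriv ^^ k) (\<lambda>x. f x * g x) =
    (\<lambda>x. \<Sum>i\<le>k. real (k choose i) * ((deriv ^^ i) f x * (deriv ^^ (k - i)) g x))"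
  using assms(3)
proof (induction k)
  case (Suc k)
  have "((\<lambda>x. \<Sum>i\<le>k. real (k choose i) * ((deriv ^^ i) f x * (deriv ^^ (k - i)) g x)) has_real_derivative
      (\<Sum>i\<le>k. real (k choose i) * ((deriv ^^ i) f x * (deriv ^^ Suc (k - i)) g x
        + (deriv ^^ Suc i) f x * (deriv ^^ (k - i)) g x))) (at x)" for x
    using Suc.prems
    by (intro DERIV_sum DERIV_cmult DERIV_mult' has_real_derivative_higher_deriv[OF assms(1)]
        has_real_derivative_higher_deriv[OF assms(2)]) auto
  then show ?case
    using Suc sum_binomial_Suc_step[of k "\<lambda>i. (deriv ^^ i) f _" "\<lambda>i. (deriv ^^ i) g _"]
    by (auto intro!: DERIV_imp_deriv)
qed simp

lemma differentiable_upto_mult: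
  assumes "differentiable_upto n f" "differentiable_upto n g"
  shows "differentiable_upto n (\<lambda>x. f x * g x)"
  unfolding differentiable_upto_def
proof (intro allI impI)
  fix k x assume "k \<le> n"
  then show "(deriv ^^ k) (\<lambda>x. f x * g x) differentiable at x"
    using assms unfolding higher_deriv_mult_upto[OF assms \<open>k \<le> n\<close>] differentiable_upto_def
    by (intro differentiable_sum differentiable_mult differentiable_const) auto
qed

lemma smooth_mult: "smooth f \<Longrightarrow> smooth g \<Longrightarrow> smooth (\<lambda>x. f x * g x)"
  unfolding smooth_def using differentiable_upto_mult by blast

lemma higher_deriv_mult_smooth:
  "smooth f \<Longrightarrow> smooth g \<Longrightarrow>
    (deriv ^^ k) (\<lambda>x. f x * g x) x =
      (\<Sum>i\<le>k. real (k choose i) * ((deriv ^^ i) f x * (deriv ^^ (k - i)) g x))"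
  using higher_deriv_mult_upto[of k f g k] by (simp add: smooth_def)

lemma smooth_inverse:
  assumes F: "smooth F" and pos: "\<And>x. F x > 0"
  shows "smooth (\<lambda>x. inverse (F x))"
proof -
  define g where "g = (\<lambda>x. inverse (F x))"
  have g_deriv: "(g has_real_derivative - deriv F x * (g x * g x)) (at x)" for x
    unfolding g_def using DERIV_inverse_fun[OF smooth_has_real_derivative[OF F], of x] pos[of x]
    by (simp add: power2_eq_square)
  then have deriv_g: "deriv g = (\<lambda>x. - deriv F x * (g x * g x))"
    by (intro ext DERIV_imp_deriv)
  have g_diff: "\<forall>x. g differentiable at x"
    using g_deriv by (auto simp: real_differentiable_def)
  have "smooth (\<lambda>x. - deriv F x)"
    using F smooth_iff_deriv smooth_uminus by blast
  have "differentiable_upto n g" for n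
  proof (induction n)
    case 0
    show ?case
      using g_diff by (simp add: differentiable_upto_def)
  next
    case (Suc n)
    have "differentiable_upto n (\<lambda>x. - deriv F x * (g x * g x))"
      using smooth_imp_differentiable_upto[OF \<open>smooth (\<lambda>x. - deriv F x)\<close>] Suc
      by (intro differentiable_upto_mult)
    then show ?case
      unfolding differentiable_upto_Suc deriv_g using g_diff by blast
  qed
  then show ?thesis
    unfolding smooth_def g_def by blast
qed

lemma
  assumes F: "smooth F" and pos: "\<And>x. F x > 0"
  shows deriv_ln: "deriv (\<lambda>x. ln (F x)) = (\<lambda>x. deriv F x * inverse (F x))"
    and smooth_ln: "smooth (\<lambda>x. ln (F x))"
proof -
  have L: "((\<lambda>x. ln (F x)) has_real_derivative deriv F x * inverse (F x)) (at x)" for x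
    using DERIV_chain2[OF DERIV_ln[OF pos[of x]] smooth_has_real_derivative[OF F]]
    by (simp add: mult.commute)
  then show deriv: "deriv (\<lambda>x. ln (F x)) = (\<lambda>x. deriv F x * inverse (F x))"
    by (intro ext DERIV_imp_deriv)
  have "smooth (\<lambda>x. deriv F x * inverse (F x))"
    using F smooth_iff_deriv smooth_inverse[OF F pos] smooth_mult by blast
  then show "smooth (\<lambda>x. ln (F x))"
    using L smooth_iff_deriv[of "\<lambda>x. ln (F x)"] unfolding deriv
    by (auto simp: real_differentiable_def)
qed

lemma higher_deriv_Suc_via_ln:
  assumes F: "smooth F" and pos: "\<And>x. F x > 0"
  shows "(deriv ^^ Suc n) F x =
    (\<Sum>i\<le>n. real (n choose i) * ((deriv ^^ i) F x * (deriv ^^ Suc (n - i)) (\<lambda>x. ln (F x)) x))"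
proof -
  let ?L = "\<lambda>x. ln (F x)"
  have "deriv F = (\<lambda>x. F x * deriv ?L x)"
    using pos unfolding deriv_ln[OF F pos] by (auto simp: field_simps less_imp_neq[symmetric])
  then have "(deriv ^^ Suc n) F x = (deriv ^^ n) (\<lambda>x. F x * deriv ?L x) x"
    by (simp only: funpow_Suc_right o_def)
  also have "\<dots> = (\<Sum>i\<le>n. real (n choose i) * ((deriv ^^ i) F x * (deriv ^^ (n - i)) (deriv ?L) x))"
    using F smooth_ln[OF F pos] smooth_iff_deriv by (blast intro: higher_deriv_mult_smooth)
  finally show ?thesis
    by (simp only: funpow_Suc_right o_def)
qed

lemma higher_deriv_ln_Suc_at_0:
  assumes F: "smooth F" and pos: "\<And>x. F x > 0" and F0: "F 0 = 1"
  shows "(deriv ^^ Suc j) (\<lambda>x. ln (F x)) 0 = (deriv ^^ Suc j) F 0 -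
    (\<Sum>i=1..j. real (j choose i) * ((deriv ^^ i) F 0 * (deriv ^^ Suc (j - i)) (\<lambda>x. ln (F x)) 0))"
  using higher_deriv_Suc_via_ln[OF F pos, of j 0] F0
  by (simp add: atMost_atLeast0 sum.atLeast_Suc_atMost)

lemma higher_deriv_ln_eq_if_higher_deriv_eq:
  assumes F: "smooth F" "\<And>x. F x > 0" "F 0 = 1" and G: "smooth G" "\<And>x. G x > 0" "G 0 = 1"
    and eq: "\<forall>i\<le>n. (deriv ^^ i) F 0 = (deriv ^^ i) G 0" and "k \<le> n"
  shows "(deriv ^^ k) (\<lambda>x. ln (F x)) 0 = (deriv ^^ k) (\<lambda>x. ln (G x)) 0"
  using \<open>k \<le> n\<close>
proof (induction k rule: less_induct)
  case (less k)
  show ?case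
  proof (cases k)
    case 0
    then show ?thesis
      using F(3) G(3) by simp
  next
    case (Suc j)
    have IH: "(deriv ^^ Suc (j - i)) (\<lambda>x. ln (F x)) 0 = (deriv ^^ Suc (j - i)) (\<lambda>x. ln (G x)) 0"
      if "i \<in> {1..j}" for i
      by (rule less.IH) (use less.prems that Suc in auto)
    have eq': "(deriv ^^ i) F 0 = (deriv ^^ i) G 0" if "i \<le> Suc j" for i
      using eq less.prems that Suc by simp
    show ?thesis
      unfolding Suc higher_deriv_ln_Suc_at_0[OF F, of j] higher_deriv_ln_Suc_at_0[OF G, of j]
      using IH eq' by (intro arg_cong2[where f = "(-)"] sum.cong) (auto simp del: funpow.simps)
  qed
qed

lemma dyadic_higher_deriv_ln:
  assumes F: "smooth F" "\<And>x. F x > 0" "F 0 = 1"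
    and dyadic: "\<forall>i\<le>n. 2 ^ i * (deriv ^^ i) F 0 \<in> \<int>" and "k \<le> n"
  shows "2 ^ k * (deriv ^^ k) (\<lambda>x. ln (F x)) 0 \<in> \<int>"
  using \<open>k \<le> n\<close>
proof (induction k rule: less_induct)
  case (less k)
  show ?case
  proof (cases k)
    case 0
    then show ?thesis
      using F(3) by simp
  next
    case (Suc j)
    let ?\<kappa> = "\<lambda>i. 2 ^ i * (deriv ^^ i) (\<lambda>x. ln (F x)) 0" and ?\<mu> = "\<lambda>i. 2 ^ i * (deriv ^^ i) F 0"
    have summand:
      "2 ^ Suc j * (real (j choose i) * ((deriv ^^ i) F 0 * (deriv ^^ Suc (j - i)) (\<lambda>x. ln (F x)) 0))
        = real (j choose i) * (?\<mu> i * ?\<kappa> (Suc (j - i)))" if "i \<in> {1..j}" for i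
    proof -
      have "(2::real) ^ Suc j = 2 ^ i * 2 ^ Suc (j - i)"
        using that by (simp flip: power_add)
      then show ?thesis
        by (simp only: mult_ac)
    qed
    have "?\<kappa> (Suc j) = ?\<mu> (Suc j) - (\<Sum>i=1..j. real (j choose i) * (?\<mu> i * ?\<kappa> (Suc (j - i))))"
      unfolding higher_deriv_ln_Suc_at_0[OF F, of j] right_diff_distrib sum_distrib_left
      using summand by (intro arg_cong2[where f = "(-)"] sum.cong) auto
    also have "\<dots> \<in> \<int>"
    proof (rule Ints_diff[OF _ Ints_sum])
      show "?\<mu> (Suc j) \<in> \<int>"
        using dyadic less.prems Suc by blast
      fix i assume "i \<in> {1..j}"
      then have "?\<mu> i \<in> \<int>" "?\<kappa> (Suc (j - i)) \<in> \<int>"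
        using less.IH[of "Suc (j - i)"] less.prems dyadic Suc by auto
      then show "real (j choose i) * (?\<mu> i * ?\<kappa> (Suc (j - i))) \<in> \<int>"
        by (intro Ints_mult[OF Ints_of_nat Ints_mult])
    qed
    finally show ?thesis
      using Suc by simp
  qed
qed

section \<open>Moment generating functions on the unit interval\<close>

definition mgf_unit :: "(real \<Rightarrow> real) \<Rightarrow> real \<Rightarrow> real" where
  "mgf_unit X t = integral {0..1} (\<lambda>\<omega>. exp (t * X \<omega>))"

lemma has_real_derivative_moment_integral:
  fixes X :: "real \<Rightarrow> real"
  assumes X: "continuous_on UNIV X"
  shows "((\<lambda>t. integral {0..1} (\<lambda>\<omega>. X \<omega> ^ k * exp (t * X \<omega>))) has_real_derivative
      integral {0..1} (\<lambda>\<omega>. X \<omega> ^ Suc k * exp (t * X \<omega>))) (at t)"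
proof -
  have X': "continuous_on S X" for S
    using X by (rule continuous_on_subset) simp
  have "((\<lambda>t. integral (cbox 0 1) (\<lambda>\<omega>. X \<omega> ^ k * exp (t * X \<omega>))) has_field_derivative
      integral (cbox 0 1) (\<lambda>\<omega>. X \<omega> ^ Suc k * exp (t * X \<omega>))) (at t within UNIV)"
  proof (rule leibniz_rule_field_derivative)
    show "((\<lambda>t. X \<omega> ^ k * exp (t * X \<omega>)) has_field_derivative X \<omega> ^ Suc k * exp (t * X \<omega>))
        (at t within UNIV)" for t \<omega>
      by (auto intro!: derivative_eq_intros simp: algebra_simps)
    show "(\<lambda>\<omega>. X \<omega> ^ k * exp (t * X \<omega>)) integrable_on cbox 0 1" for t
      by (intro integrable_continuous continuous_intros X')
    show "continuous_on (UNIV \<times> cbox 0 1) (\<lambda>(t, \<omega>). X \<omega> ^ Suc k * exp (t * X \<omega>))"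
      unfolding case_prod_beta
      by (intro continuous_intros continuous_on_compose2[OF X continuous_on_snd]) auto
  qed auto
  then show ?thesis
    by (simp add: cbox_interval)
qed

lemma higher_deriv_mgf_unit:
  assumes "continuous_on UNIV X"
  shows "(deriv ^^ k) (mgf_unit X) = (\<lambda>t. integral {0..1} (\<lambda>\<omega>. X \<omega> ^ k * exp (t * X \<omega>)))"
proof (induction k)
  case (Suc k)
  then show ?case
    using DERIV_imp_deriv[OF has_real_derivative_moment_integral[OF assms]] by auto
qed (simp add: mgf_unit_def[abs_def])

lemma higher_deriv_mgf_unit_0:
  "continuous_on UNIV X \<Longrightarrow> (deriv ^^ k) (mgf_unit X) 0 = integral {0..1} (\<lambda>\<omega>. X \<omega> ^ k)"
  by (simp add: higher_deriv_mgf_unit)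

lemma smooth_mgf_unit: "continuous_on UNIV X \<Longrightarrow> smooth (mgf_unit X)"
  unfolding smooth_def differentiable_upto_def higher_deriv_mgf_unit
  using has_real_derivative_moment_integral real_differentiable_def by blast

lemma mgf_unit_0 [simp]: "mgf_unit X 0 = 1"
  by (simp add: mgf_unit_def)

lemma mgf_unit_pos:
  assumes X: "continuous_on UNIV X" and bound: "\<And>\<omega>. \<bar>X \<omega>\<bar> \<le> C"
  shows "mgf_unit X t > 0"
proof -
  have "exp (- \<bar>t\<bar> * C) \<le> exp (t * X \<omega>)" for \<omega>
  proof -
    have "\<bar>t * X \<omega>\<bar> \<le> \<bar>t\<bar> * C"
      using bound[of \<omega>] by (simp add: abs_mult mult_left_mono)
    then show ?thesis
      by simp
  qed
  moreover have "(\<lambda>\<omega>. exp (t * X \<omega>)) integrable_on {0..1}"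
    by (intro integrable_continuous_interval continuous_intros continuous_on_subset[OF X]) auto
  ultimately have "integral {0..1::real} (\<lambda>_. exp (- \<bar>t\<bar> * C)) \<le> mgf_unit X t"
    unfolding mgf_unit_def by (intro integral_le) auto
  then show ?thesis
    by (simp add: order_less_le_trans[OF exp_gt_zero])
qed

lemma cumulant_eq_higher_deriv_ln_mgf_unit:
  assumes X: "continuous_on UNIV X"
  shows "cumulant (lebesgue_on {0..1}) m X = (deriv ^^ m) (\<lambda>t. ln (mgf_unit X t)) 0"
proof -
  have "integral\<^sup>L (lebesgue_on {0..1}) (\<lambda>\<omega>. exp (t * X \<omega>)) = mgf_unit X t" for t
    unfolding mgf_unit_def
    by (intro lebesgue_integral_eq_integral continuous_imp_integrable_real continuous_intros
        continuous_on_subset[OF X]) auto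
  then show ?thesis
    by (simp add: cumulant_def)
qed

section \<open>Integrals of products of cosines\<close>

lemma continuous_on_prod_cos:
  fixes f :: "'a \<Rightarrow> real"
  shows "continuous_on S (\<lambda>\<omega>. \<Prod>k\<leftarrow>xs. cos (f k * \<omega>))"
  by (induction xs) (auto intro!: continuous_intros)

lemma prod_cos_eq_sum_signs:
  fixes \<theta> :: "'a \<Rightarrow> real"
  shows "(\<Prod>k\<leftarrow>xs. cos (\<theta> k)) =
    (\<Sum>es\<in>signs (length xs). cos (\<Sum>p\<leftarrow>zip es xs. of_int (fst p) * \<theta> (snd p))) / 2 ^ length xs"
proof (induction xs)
  case (Cons x xs)
  let ?T = "\<lambda>es. \<Sum>p\<leftarrow>zip es xs. of_int (fst p) * \<theta> (snd p)"
  have product: "cos (\<theta> x) * cos (?T es) = (cos (- \<theta> x + ?T es) + cos (\<theta> x + ?T es)) / 2" for es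
    using cos_times_cos[of "\<theta> x" "?T es"] cos_minus[of "\<theta> x - ?T es"] by simp
  have "(\<Prod>k\<leftarrow>x # xs. cos (\<theta> k)) = (\<Sum>es\<in>signs (length xs). cos (\<theta> x) * cos (?T es)) / 2 ^ length xs"
    using Cons by (simp add: sum_distrib_left)
  also have "\<dots> = (\<Sum>es\<in>signs (length xs). cos (- \<theta> x + ?T es) + cos (\<theta> x + ?T es)) / 2 ^ Suc (length xs)"
    unfolding product by (simp add: sum_divide_distrib[symmetric])
  also have "(\<Sum>es\<in>signs (length xs). cos (- \<theta> x + ?T es) + cos (\<theta> x + ?T es))
      = (\<Sum>es\<in>signs (Suc (length xs)). cos (\<Sum>p\<leftarrow>zip es (x # xs). of_int (fst p) * \<theta> (snd p)))"
    by (subst sum_tuples_Suc) auto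
  finally show ?case
    by simp
qed simp

lemma integral_cos_int:
  fixes N :: int
  shows "integral {0..1} (\<lambda>\<omega>. cos (2 * pi * of_int N * \<omega>)) = of_bool (N = 0)"
proof (cases "N = 0")
  case False
  have "((\<lambda>\<omega>. cos (2 * pi * of_int N * \<omega>)) has_integral
      sin (2 * pi * of_int N * 1) / (2 * pi * of_int N) -
      sin (2 * pi * of_int N * 0) / (2 * pi * of_int N)) {0..1}"
    using False
    by (intro fundamental_theorem_of_calculus)
       (auto intro!: derivative_eq_intros simp flip: has_real_derivative_iff_has_vector_derivative)
  then show ?thesis
    using False by (simp add: integral_unique sin_int_2pin)
qed simp

lemma integral_prod_cos_int:
  fixes A :: "nat \<Rightarrow> int"
  shows "integral {0..1} (\<lambda>\<omega>. \<Prod>k\<leftarrow>xs. cos (2 * pi * of_int (A k) * \<omega>)) =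
    (\<Sum>es\<in>signs (length xs). of_bool (signed_sum A (zip es xs) = 0)) / 2 ^ length xs"
proof -
  let ?n = "length xs"
  have lin: "(\<Sum>p\<leftarrow>zip es xs. of_int (fst p) * (2 * pi * of_int (A (snd p)) * \<omega>))
      = 2 * pi * of_int (signed_sum A (zip es xs)) * \<omega>" for es \<omega>
  proof (induction xs arbitrary: es)
    case (Cons x xs)
    then show ?case
      by (cases es) (auto simp: algebra_simps)
  qed simp
  have "integral {0..1} (\<lambda>\<omega>. \<Prod>k\<leftarrow>xs. cos (2 * pi * of_int (A k) * \<omega>))
      = integral {0..1} (\<lambda>\<omega>. \<Sum>es\<in>signs ?n. cos (2 * pi * of_int (signed_sum A (zip es xs)) * \<omega>)) / 2 ^ ?n"
    unfolding prod_cos_eq_sum_signs lin by (rule integral_divide)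
  also have "\<dots> = (\<Sum>es\<in>signs ?n.
      integral {0..1} (\<lambda>\<omega>. cos (2 * pi * of_int (signed_sum A (zip es xs)) * \<omega>))) / 2 ^ ?n"
    by (subst integral_sum)
      (auto intro!: integrable_continuous_interval continuous_intros finite_tuples)
  finally show ?thesis
    by (simp add: integral_cos_int)
qed

section \<open>Eventually linear set functions\<close>

definition tuple_sum_form :: "nat \<Rightarrow> (nat set \<Rightarrow> real) \<Rightarrow> bool" where
  "tuple_sum_form k g \<longleftrightarrow> (\<exists>\<psi>. \<forall>A. finite A \<longrightarrow> A \<subseteq> {1..} \<longrightarrow> g A = (\<Sum>xs\<in>tuples k A. \<psi> xs))"

lemma tuple_sum_form_diff:
  assumes "tuple_sum_form k f" "tuple_sum_form k g"
  shows "tuple_sum_form k (\<lambda>A. f A - g A)"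
proof -
  obtain \<psi>1 \<psi>2 where "\<forall>A. finite A \<longrightarrow> A \<subseteq> {1..} \<longrightarrow> f A = (\<Sum>xs\<in>tuples k A. \<psi>1 xs)"
    "\<forall>A. finite A \<longrightarrow> A \<subseteq> {1..} \<longrightarrow> g A = (\<Sum>xs\<in>tuples k A. \<psi>2 xs)"
    using assms unfolding tuple_sum_form_def by blast
  then show ?thesis
    unfolding tuple_sum_form_def by (intro exI[of _ "\<lambda>xs. \<psi>1 xs - \<psi>2 xs"]) (simp add: sum_subtractf)
qed

lemma tuple_sum_form_cmult: "tuple_sum_form k f \<Longrightarrow> tuple_sum_form k (\<lambda>A. r * f A)"
  unfolding tuple_sum_form_def by (metis (no_types, lifting) sum_distrib_left)

lemma tuple_sum_form_sum:
  assumes "finite I" "\<And>i. i \<in> I \<Longrightarrow> tuple_sum_form k (f i)"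
  shows "tuple_sum_form k (\<lambda>A. \<Sum>i\<in>I. f i A)"
  using assms
proof (induction I rule: finite_induct)
  case empty
  show ?case
    unfolding tuple_sum_form_def by (intro exI[of _ "\<lambda>_. 0"]) simp
next
  case (insert i I)
  then show ?case
    using tuple_sum_form_diff[of k "f i" "\<lambda>A. - (\<Sum>i\<in>I. f i A)"]
      tuple_sum_form_cmult[of k "\<lambda>A. \<Sum>i\<in>I. f i A" "-1"]
    by simp
qed

lemma tuple_sum_form_mult:
  assumes "tuple_sum_form k f" "tuple_sum_form l g"
  shows "tuple_sum_form (k + l) (\<lambda>A. f A * g A)"
proof -
  obtain \<psi>1 \<psi>2 where "\<forall>A. finite A \<longrightarrow> A \<subseteq> {1..} \<longrightarrow> f A = (\<Sum>xs\<in>tuples k A. \<psi>1 xs)"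
    "\<forall>A. finite A \<longrightarrow> A \<subseteq> {1..} \<longrightarrow> g A = (\<Sum>xs\<in>tuples l A. \<psi>2 xs)"
    using assms unfolding tuple_sum_form_def by blast
  then show ?thesis
    unfolding tuple_sum_form_def
    by (intro exI[of _ "\<lambda>zs. \<psi>1 (take k zs) * \<psi>2 (drop k zs)"]) (simp add: sum_tuples_mult)
qed

locale gap_additive_setfun =
  fixes f :: "nat set \<Rightarrow> real" and \<psi> :: "nat list \<Rightarrow> real" and m G H :: nat
  assumes m_pos: "1 \<le> m" and G_pos: "1 \<le> G" and H_pos: "1 \<le> H"
    and tuple_sum: "\<And>A. finite A \<Longrightarrow> A \<subseteq> {1..} \<Longrightarrow> f A = (\<Sum>xs\<in>tuples m A. \<psi> xs)"
    and gap_additive: "\<And>A r. finite A \<Longrightarrow> A \<subseteq> {1..} \<Longrightarrow> \<forall>x\<in>A. x \<le> r \<or> r + G \<le> x \<Longrightarrow>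
      f A = f {x\<in>A. x \<le> r} + f {x\<in>A. r + G \<le> x}"
    and shift_invariant: "\<And>A s. finite A \<Longrightarrow> A \<subseteq> {H..} \<Longrightarrow> f ((\<lambda>x. x + s) ` A) = f A"
begin

definition exact_part :: "nat set \<Rightarrow> real" where
  "exact_part B = (\<Sum>xs\<in>{xs\<in>tuples m B. set xs = B}. \<psi> xs)"

lemma f_eq_sum_exact_parts:
  assumes "finite A" "A \<subseteq> {1..}"
  shows "f A = (\<Sum>B\<in>Pow A. exact_part B)"
proof -
  have "f A = (\<Sum>B\<in>Pow A. \<Sum>xs\<in>{xs\<in>tuples m A. set xs = B}. \<psi> xs)"
    unfolding tuple_sum[OF assms]
    by (rule sum.group[symmetric]) (use finite_tuples[OF assms(1)] assms(1) in \<open>auto simp: tuples_def\<close>)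
  also have "\<dots> = (\<Sum>B\<in>Pow A. exact_part B)"
    unfolding exact_part_def
    by (intro sum.cong refl arg_cong2[where f = sum]) (auto simp: tuples_def)
  finally show ?thesis .
qed

lemma exact_part_nonzero:
  assumes "exact_part B \<noteq> 0"
  shows "B \<noteq> {}" "card B \<le> m"
proof -
  have "{xs\<in>tuples m B. set xs = B} \<noteq> {}"
    using assms unfolding exact_part_def by (metis sum.empty)
  then obtain xs where xs: "xs \<in> tuples m B" "set xs = B"
    by blast
  then show "card B \<le> m"
    using card_length[of xs] by (auto simp: tuples_def)
  show "B \<noteq> {}"
    using xs m_pos by (auto simp: tuples_def)
qed

lemma exact_part_empty: "exact_part {} = 0"
  using exact_part_nonzero(1) by blast

lemma f_eq_disjoint_parts_plus_mixed:
  assumes "finite B" "B \<subseteq> {1..}" "B1 \<subseteq> B" "B2 \<subseteq> B" "B1 \<inter> B2 = {}"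
  shows "f B = f B1 + f B2 + (\<Sum>D\<in>Pow B - (Pow B1 \<union> Pow B2). exact_part D)"
proof -
  have fin: "finite B1" "finite B2" "finite (Pow B)"
    using assms by (auto intro: finite_subset)
  have "Pow B = (Pow B1 \<union> Pow B2) \<union> (Pow B - (Pow B1 \<union> Pow B2))"
    using assms(3,4) by auto
  then have "f B = (\<Sum>D\<in>Pow B1 \<union> Pow B2. exact_part D) + (\<Sum>D\<in>Pow B - (Pow B1 \<union> Pow B2). exact_part D)"
    using f_eq_sum_exact_parts[OF assms(1,2)] fin
    by (metis Diff_disjoint finite_Diff finite_Un sum.union_disjoint)
  moreover have "Pow B1 \<inter> Pow B2 = {{}}"
    using assms(5) by auto
  then have "(\<Sum>D\<in>Pow B1 \<union> Pow B2. exact_part D) = f B1 + f B2"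
    using assms fin exact_part_empty by (simp add: sum.union_inter_neutral f_eq_sum_exact_parts)
  ultimately show ?thesis
    by simp
qed

lemma exact_part_split:
  assumes "finite B" "B \<subseteq> {1..}" "\<forall>x\<in>B. x \<le> r \<or> r + G \<le> x"
    and "\<exists>x\<in>B. x \<le> r" "\<exists>x\<in>B. r + G \<le> x"
  shows "exact_part B = 0"
  using assms
proof (induction "card B" arbitrary: B rule: less_induct)
  case less
  define B1 where "B1 = {x\<in>B. x \<le> r}"
  define B2 where "B2 = {x\<in>B. r + G \<le> x}"
  define mixed where "mixed = Pow B - (Pow B1 \<union> Pow B2)"
  have "B \<in> mixed"
    using less.prems(4,5) G_pos by (force simp: mixed_def B1_def B2_def)
  \<comment> \<open>Smaller sets meeting both sides vanish by induction, so \<open>exact_part B\<close> is the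
    additivity defect of f on B.\<close>
  have "exact_part D = 0" if "D \<in> mixed - {B}" for D
  proof (rule less.hyps)
    show "card D < card B"
      using that less.prems(1) by (auto simp: mixed_def intro: psubset_card_mono)
    show "\<exists>x\<in>D. x \<le> r" "\<exists>x\<in>D. r + G \<le> x"
      using that less.prems(3) by (auto simp: mixed_def B1_def B2_def)
  qed (use that less.prems(1-3) in \<open>auto simp: mixed_def intro: finite_subset\<close>)
  then have "(\<Sum>D\<in>mixed. exact_part D) = exact_part B"
    using \<open>B \<in> mixed\<close> less.prems(1) by (subst sum.remove) (auto simp: mixed_def)
  moreover have "f B = f B1 + f B2 + (\<Sum>D\<in>mixed. exact_part D)"
    unfolding mixed_def using less.prems(1,2) G_pos
    by (intro f_eq_disjoint_parts_plus_mixed) (auto simp: B1_def B2_def)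
  moreover have "f B = f B1 + f B2"
    unfolding B1_def B2_def using gap_additive less.prems(1-3) by blast
  ultimately show "exact_part B = 0"
    by simp
qed

lemma exact_part_span:
  assumes nz: "exact_part B \<noteq> 0" and B: "finite B" "B \<subseteq> {1..}"
  shows "Max B < Min B + m * G"
proof (rule ccontr)
  assume "\<not> ?thesis"
  then have spread: "Min B + m * G \<le> Max B"
    by simp
  have "B \<noteq> {}" "card B \<le> m"
    using exact_part_nonzero[OF nz] by auto
  then have Min_Max: "Min B \<in> B" "Max B \<in> B" "\<forall>k\<in>B. k \<le> Max B"
    using B(1) by auto
  \<comment> \<open>B has at most m elements, so one of the m windows of length G below Max B misses B.\<close>
  obtain i where "i < m" and empty: "\<forall>k\<in>B. \<not> (Max B \<le> k + Suc i * G \<and> k + i * G < Max B)"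
    using exists_empty_window[of "\<lambda>i. i * G" B m "Max B"] B(1) \<open>card B \<le> m\<close> Min_Max by auto
  have "Min B + Suc i * G \<le> Max B"
    using spread \<open>i < m\<close> mult_le_mono1[of "Suc i" m G] by linarith
  moreover have "Min B + Suc i * G \<noteq> Max B"
    using empty Min_Max(1) G_pos by fastforce
  ultimately have Min_lt: "Min B + Suc i * G < Max B"
    by simp
  define r where "r = Max B - Suc i * G - 1"
  have "exact_part B = 0"
  proof (rule exact_part_split[OF B, of r])
    show "\<forall>x\<in>B. x \<le> r \<or> r + G \<le> x"
      using empty Min_lt unfolding r_def by fastforce
    show "\<exists>x\<in>B. x \<le> r"
      using Min_Max(1) Min_lt unfolding r_def by (intro bexI[of _ "Min B"]) auto
    show "\<exists>x\<in>B. r + G \<le> x"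
      using Min_Max(2) Min_lt unfolding r_def by (intro bexI[of _ "Max B"]) auto
  qed
  with nz show False
    by simp
qed

lemma exact_part_shift:
  assumes "finite B" "B \<subseteq> {H..}"
  shows "exact_part ((\<lambda>x. x + s) ` B) = exact_part B"
  using assms
proof (induction "card B" arbitrary: B rule: less_induct)
  case less
  let ?sh = "image (\<lambda>x::nat. x + s)"
  have inj: "inj_on ?sh X" for X
    by (intro inj_onI) (simp add: inj_image_eq_iff)
  have B1: "B \<subseteq> {1..}" "?sh B \<subseteq> {1..}"
    using less.prems(2) H_pos by auto
  have "Pow (?sh B) = ?sh ` Pow B"
    by (rule image_Pow_surj[symmetric]) simp
  then have "f (?sh B) = (\<Sum>D\<in>?sh ` Pow B. exact_part D)"
    using f_eq_sum_exact_parts[of "?sh B"] less.prems(1) B1(2) by simp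
  also have "\<dots> = (\<Sum>D\<in>Pow B. exact_part (?sh D))"
    by (simp add: sum.reindex[OF inj])
  also have "\<dots> = exact_part (?sh B) + (\<Sum>D\<in>Pow B - {B}. exact_part D)"
  proof -
    have "exact_part (?sh D) = exact_part D" if "D \<in> Pow B - {B}" for D
      using that less.prems by (intro less.hyps) (auto intro: psubset_card_mono finite_subset)
    then show ?thesis
      using less.prems(1) by (simp add: sum.remove[of "Pow B" B])
  qed
  finally have "f (?sh B) = exact_part (?sh B) + (\<Sum>D\<in>Pow B - {B}. exact_part D)" .
  moreover have "f B = exact_part B + (\<Sum>D\<in>Pow B - {B}. exact_part D)"
    using f_eq_sum_exact_parts[OF less.prems(1) B1(1)] less.prems(1)
    by (simp add: sum.remove[of "Pow B" B])
  moreover have "f (?sh B) = f B"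
    using shift_invariant less.prems by blast
  ultimately show ?case
    by simp
qed

definition "ending_at k = {D. D \<subseteq> {1..k} \<and> k \<in> D}"

definition "window_ending_at k = {D. D \<subseteq> {k + 1 - m * G..k} \<and> k \<in> D}"

lemma f_Suc_diff: "f {1..Suc n} - f {1..n} = (\<Sum>D\<in>ending_at (Suc n). exact_part D)"
proof -
  have "Pow {1..Suc n} = Pow {1..n} \<union> ending_at (Suc n)" "Pow {1..n} \<inter> ending_at (Suc n) = {}"
    by (auto simp: ending_at_def subset_iff le_Suc_eq)
  then show ?thesis
    using f_eq_sum_exact_parts[of "{1..n}"] f_eq_sum_exact_parts[of "{1..Suc n}"]
    by (simp add: sum.union_disjoint ending_at_def)
qed

lemma sum_ending_at_eq_window:
  assumes "m * G \<le> k"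
  shows "(\<Sum>D\<in>ending_at k. exact_part D) = (\<Sum>D\<in>window_ending_at k. exact_part D)"
proof (rule sum.mono_neutral_right)
  show "finite (ending_at k)"
    unfolding ending_at_def by (rule finite_subset[of _ "Pow {1..k}"]) auto
  have "{k + 1 - m * G..k} \<subseteq> {1..k}"
    using assms by auto
  then show "window_ending_at k \<subseteq> ending_at k"
    unfolding ending_at_def window_ending_at_def by blast
  show "\<forall>D\<in>ending_at k - window_ending_at k. exact_part D = 0"
  proof (rule ballI, rule ccontr)
    fix D assume D: "D \<in> ending_at k - window_ending_at k" and nz: "exact_part D \<noteq> 0"
    then have sub: "D \<subseteq> {1..k}" and "k \<in> D" and "\<not> D \<subseteq> {k + 1 - m * G..k}"
      unfolding ending_at_def window_ending_at_def by auto
    then obtain x where x: "x \<in> D" "x < k + 1 - m * G"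
      by (metis atLeastAtMost_iff not_le subset_iff)
    have fin: "finite D"
      using sub by (rule finite_subset) simp
    have "Max D = k"
      using sub \<open>k \<in> D\<close> fin by (intro Max_eqI) auto
    moreover have "Min D \<le> x"
      using fin x(1) by (rule Min_le)
    moreover have "Max D < Min D + m * G"
      using exact_part_span[OF nz fin] sub by fastforce
    ultimately show False
      using x(2) by linarith
  qed
qed

lemma window_ending_at_shift:
  assumes "H + m * G \<le> k + 1"
  shows "(\<Sum>D\<in>window_ending_at (k + s). exact_part D) = (\<Sum>D\<in>window_ending_at k. exact_part D)"
proof -
  let ?sh = "image (\<lambda>x::nat. x + s)"
  define I where "I = {k + 1 - m * G..k}"
  have I_shift: "{k + s + 1 - m * G..k + s} = ?sh I"
    using assms by (simp add: I_def)
  have "window_ending_at (k + s) = ?sh ` window_ending_at k"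
    unfolding window_ending_at_def I_shift I_def[symmetric]
  proof (intro equalityI subsetI)
    fix D assume "D \<in> {D. D \<subseteq> ?sh I \<and> k + s \<in> D}"
    then obtain D' where "D' \<subseteq> I" "D = ?sh D'" "k + s \<in> D"
      by (auto simp: subset_image_iff)
    then show "D \<in> ?sh ` {D. D \<subseteq> I \<and> k \<in> D}"
      by auto
  next
    fix D assume "D \<in> ?sh ` {D. D \<subseteq> I \<and> k \<in> D}"
    then obtain D' where "D' \<subseteq> I" "k \<in> D'" "D = ?sh D'"
      by blast
    then show "D \<in> {D. D \<subseteq> ?sh I \<and> k + s \<in> D}"
      by (simp add: image_mono)
  qed
  moreover have "inj_on ?sh X" for X
    by (intro inj_onI) (simp add: inj_image_eq_iff)
  moreover have "exact_part (?sh D) = exact_part D" if "D \<in> window_ending_at k" for D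
  proof (rule exact_part_shift)
    have "finite I" "I \<subseteq> {H..}"
      using assms by (auto simp: I_def)
    then show "finite D" "D \<subseteq> {H..}"
      using that unfolding window_ending_at_def I_def[symmetric] by (auto intro: finite_subset)
  qed
  ultimately show ?thesis
    by (simp add: sum.reindex)
qed

lemma eventually_linear: "\<exists>w b N. \<forall>n\<ge>N. f {1..n} = w * real n + b"
proof -
  define N where "N = H + m * G"
  define w where "w = (\<Sum>D\<in>window_ending_at N. exact_part D)"
  have increment: "f {1..Suc n} = f {1..n} + w" if "N \<le> n" for n
  proof -
    have "f {1..Suc n} - f {1..n} = (\<Sum>D\<in>window_ending_at (N + (Suc n - N)). exact_part D)"
      using that unfolding f_Suc_diff N_def by (subst sum_ending_at_eq_window) auto
    also have "\<dots> = w"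
      unfolding w_def N_def by (rule window_ending_at_shift) simp
    finally show ?thesis
      by simp
  qed
  have "f {1..n} = f {1..N} + (real n - real N) * w" if "N \<le> n" for n
    using that
  proof (induction n rule: dec_induct)
    case (step n)
    then show ?case
      using increment[of n] by (simp add: algebra_simps)
  qed simp
  then show ?thesis
    by (intro exI[of _ w] exI[of _ "f {1..N} - real N * w"] exI[of _ N]) (auto simp: algebra_simps)
qed

end

section \<open>Cumulants of the cosine sums\<close>

locale integer_dominant_root_seq = dominant_root_seq +
  assumes integer_values: "\<forall>k\<ge>1. \<exists>z::int. lin_rec_seq d c lam k = of_int z"
begin

text \<open>Only a_k with k \<ge> 1 are integers, so index sets are confined to {1..} throughout.\<close>

definition "a_int k = \<lfloor>Re (a k)\<rfloor>"

lemma a_eq_of_int: "k \<ge> 1 \<Longrightarrow> a k = of_int (a_int k)"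
  using integer_values unfolding a_int_def by force

definition cos_sum :: "nat set \<Rightarrow> real \<Rightarrow> real" where
  "cos_sum A \<omega> = (\<Sum>k\<in>A. cos (2 * pi * Re (a k) * \<omega>))"

lemma continuous_cos_sum: "continuous_on UNIV (cos_sum A)"
  unfolding cos_sum_def[abs_def] by (intro continuous_intros)

lemma abs_cos_sum_le: "\<bar>cos_sum A \<omega>\<bar> \<le> card A"
proof -
  have "\<bar>cos_sum A \<omega>\<bar> \<le> (\<Sum>k\<in>A. \<bar>cos (2 * pi * Re (a k) * \<omega>)\<bar>)"
    unfolding cos_sum_def by (rule sum_abs)
  also have "\<dots> \<le> (\<Sum>k\<in>A. 1)"
    by (intro sum_mono) simp
  finally show ?thesis
    by simp
qed

abbreviation "mgf A \<equiv> mgf_unit (cos_sum A)"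

lemma smooth_mgf: "smooth (mgf A)"
  and mgf_pos: "mgf A t > 0"
  using smooth_mgf_unit mgf_unit_pos continuous_cos_sum abs_cos_sum_le by blast+

definition "moment i A = (deriv ^^ i) (mgf A) 0"

definition "cumul i A = (deriv ^^ i) (\<lambda>t. ln (mgf A t)) 0"

definition zero_sum_fraction :: "nat list \<Rightarrow> real" where
  "zero_sum_fraction xs =
    (\<Sum>es\<in>signs (length xs). of_bool (signed_sum a (zip es xs) = 0)) / 2 ^ length xs"

lemma integral_prod_cos:
  assumes "set xs \<subseteq> {1..}"
  shows "integral {0..1} (\<lambda>\<omega>. \<Prod>k\<leftarrow>xs. cos (2 * pi * Re (a k) * \<omega>)) = zero_sum_fraction xs"
proof -
  have "\<forall>k\<in>set xs. a k = of_int (a_int k)"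
    using assms a_eq_of_int by auto
  then have "signed_sum a (zip es xs) = of_int (signed_sum a_int (zip es xs))" for es
    unfolding signed_sum_of_int[symmetric] by (intro signed_sum_cong) (auto dest: set_zip_rightD)
  moreover have "(\<Prod>k\<leftarrow>xs. cos (2 * pi * Re (a k) * \<omega>)) = (\<Prod>k\<leftarrow>xs. cos (2 * pi * of_int (a_int k) * \<omega>))" for \<omega>
    using \<open>\<forall>k\<in>set xs. a k = of_int (a_int k)\<close> by (intro arg_cong[where f = prod_list] map_cong) auto
  ultimately show ?thesis
    using integral_prod_cos_int[of a_int xs] unfolding zero_sum_fraction_def by simp
qed

lemma moment_eq_sum_tuples:
  assumes A: "finite A" "A \<subseteq> {1..}"
  shows "moment i A = (\<Sum>xs\<in>tuples i A. zero_sum_fraction xs)"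
proof -
  have "moment i A = integral {0..1} (\<lambda>\<omega>. \<Sum>xs\<in>tuples i A. \<Prod>k\<leftarrow>xs. cos (2 * pi * Re (a k) * \<omega>))"
    unfolding moment_def higher_deriv_mgf_unit_0[OF continuous_cos_sum] cos_sum_def
    by (simp add: power_sum_eq_sum_tuples[OF A(1)])
  also have "\<dots> = (\<Sum>xs\<in>tuples i A. integral {0..1} (\<lambda>\<omega>. \<Prod>k\<leftarrow>xs. cos (2 * pi * Re (a k) * \<omega>)))"
    by (intro integral_sum finite_tuples A integrable_continuous_interval continuous_on_prod_cos)
  also have "\<dots> = (\<Sum>xs\<in>tuples i A. zero_sum_fraction xs)"
    using A(2) by (intro sum.cong refl integral_prod_cos) (auto simp: tuples_def)
  finally show ?thesis .
qed

lemma dyadic_moment: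
  assumes "finite A" "A \<subseteq> {1..}"
  shows "2 ^ i * moment i A \<in> \<int>"
proof -
  have "2 ^ i * moment i A = (\<Sum>xs\<in>tuples i A. \<Sum>es\<in>signs i. of_bool (signed_sum a (zip es xs) = 0))"
    unfolding moment_eq_sum_tuples[OF assms] sum_distrib_left
    by (intro sum.cong) (auto simp: zero_sum_fraction_def tuples_def)
  also have "\<dots> \<in> \<int>"
    by (intro Ints_sum) simp
  finally show ?thesis .
qed

lemma dyadic_cumul:
  assumes "finite A" "A \<subseteq> {1..}"
  shows "2 ^ k * cumul k A \<in> \<int>"
  unfolding cumul_def
  using dyadic_moment[OF assms] smooth_mgf mgf_pos
  by (intro dyadic_higher_deriv_ln[of _ k k]) (auto simp: moment_def)

lemma tuple_sum_form_moment: "tuple_sum_form i (moment i)"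
  unfolding tuple_sum_form_def using moment_eq_sum_tuples by blast

lemma cumul_Suc:
  "cumul (Suc j) A =
    moment (Suc j) A - (\<Sum>i=1..j. real (j choose i) * (moment i A * cumul (Suc (j - i)) A))"
  unfolding cumul_def moment_def using higher_deriv_ln_Suc_at_0[OF smooth_mgf mgf_pos, of A j]
  by simp

lemma tuple_sum_form_cumul: "1 \<le> k \<Longrightarrow> tuple_sum_form k (cumul k)"
proof (induction k rule: less_induct)
  case (less k)
  then obtain j where k: "k = Suc j"
    by (cases k) auto
  have "tuple_sum_form (Suc j) (\<lambda>A. real (j choose i) * (moment i A * cumul (Suc (j - i)) A))"
    if "i \<in> {1..j}" for i
  proof -
    have "tuple_sum_form (i + Suc (j - i)) (\<lambda>A. moment i A * cumul (Suc (j - i)) A)"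
      using that k by (intro tuple_sum_form_mult tuple_sum_form_moment less.IH) auto
    moreover have "i + Suc (j - i) = Suc j"
      using that by simp
    ultimately show ?thesis
      by (intro tuple_sum_form_cmult) simp
  qed
  then have "tuple_sum_form (Suc j) (\<lambda>A. moment (Suc j) A -
      (\<Sum>i=1..j. real (j choose i) * (moment i A * cumul (Suc (j - i)) A)))"
    by (intro tuple_sum_form_diff tuple_sum_form_moment tuple_sum_form_sum) auto
  then show ?case
    unfolding k cumul_Suc[of j] .
qed

lemma zero_sum_fraction_shift:
  assumes "set xs \<subseteq> {shift_threshold M..}" "length xs \<le> M"
  shows "zero_sum_fraction (map (\<lambda>k. k + s) xs) = zero_sum_fraction xs"
proof -
  have "signed_sum a (shift_indices s (zip es xs)) = 0 \<longleftrightarrow> signed_sum a (zip es xs) = 0"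
    if "es \<in> signs (length xs)" for es
    using assms that
    by (intro signed_sum_shift_invariant[of "zip es xs" M] is_signed_zip) (auto dest: set_zip_rightD)
  then show ?thesis
    unfolding zero_sum_fraction_def zip_map_add length_map
    by (intro arg_cong2[where f = "(/)"] sum.cong) auto
qed

lemma moment_shift:
  assumes A: "finite A" "A \<subseteq> {shift_threshold M..}" and "i \<le> M"
  shows "moment i ((\<lambda>x. x + s) ` A) = moment i A"
proof -
  have A1: "A \<subseteq> {1..}" "(\<lambda>x. x + s) ` A \<subseteq> {1..}"
    using A(2) by (auto simp: shift_threshold_def)
  have "inj_on (map (\<lambda>x. x + s)) (tuples i A)"
    by (auto simp: inj_on_def)
  then have "moment i ((\<lambda>x. x + s) ` A) = (\<Sum>xs\<in>tuples i A. zero_sum_fraction (map (\<lambda>x. x + s) xs))"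
    using A(1) A1(2) by (simp add: moment_eq_sum_tuples tuples_image sum.reindex)
  also have "\<dots> = moment i A"
    unfolding moment_eq_sum_tuples[OF A(1) A1(1)] using A(2) \<open>i \<le> M\<close>
    by (intro sum.cong refl zero_sum_fraction_shift) (auto simp: tuples_def)
  finally show ?thesis .
qed

lemma cumul_shift:
  assumes "finite A" "A \<subseteq> {shift_threshold M..}" "k \<le> M"
  shows "cumul k ((\<lambda>x. x + s) ` A) = cumul k A"
  unfolding cumul_def using moment_shift[OF assms(1,2)] assms(3)
  by (intro higher_deriv_ln_eq_if_higher_deriv_eq[of _ _ M] smooth_mgf mgf_pos) (auto simp: moment_def)

lemma zero_sum_fraction_append:
  assumes xs: "\<forall>k\<in>set xs. k \<le> r" and ys: "\<forall>k\<in>set ys. r + split_gap M \<le> k"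
    and len: "length xs + length ys \<le> M"
  shows "zero_sum_fraction (xs @ ys) = zero_sum_fraction xs * zero_sum_fraction ys"
proof -
  let ?z = "\<lambda>es zs. of_bool (signed_sum a (zip es zs) = 0) :: real"
  have split: "?z es (xs @ ys) = ?z (take (length xs) es) xs * ?z (drop (length xs) es) ys"
    if "es \<in> signs (length xs + length ys)" for es
  proof -
    define e1 e2 where "e1 = take (length xs) es" and "e2 = drop (length xs) es"
    have "e1 \<in> signs (length xs)" "e2 \<in> signs (length ys)"
      using take_drop_tuples[OF that] by (auto simp: e1_def e2_def)
    moreover have "\<forall>x\<in>set (zip e1 xs). snd x \<le> r" "\<forall>x\<in>set (zip e2 ys). r + split_gap M \<le> snd x"
      using xs ys by (auto dest: set_zip_rightD)
    moreover have "length (zip e1 xs @ zip e2 ys) \<le> M"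
      using len by simp
    ultimately have "signed_sum a (zip e1 xs @ zip e2 ys) = 0 \<longleftrightarrow>
        signed_sum a (zip e1 xs) = 0 \<and> signed_sum a (zip e2 ys) = 0"
      by (intro signed_sum_append_eq_0_iff is_signed_zip)
    moreover have "zip es (xs @ ys) = zip e1 xs @ zip e2 ys"
      unfolding e1_def e2_def by (rule zip_append2)
    ultimately show ?thesis
      unfolding e1_def e2_def by simp
  qed
  have "zero_sum_fraction (xs @ ys) =
      (\<Sum>es\<in>signs (length xs + length ys). ?z (take (length xs) es) xs * ?z (drop (length xs) es) ys)
        / (2 ^ length xs * 2 ^ length ys)"
    unfolding zero_sum_fraction_def
    using split by (intro arg_cong2[where f = "(/)"] sum.cong) (auto simp: power_add)
  also have "\<dots> = zero_sum_fraction xs * zero_sum_fraction ys"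
    unfolding zero_sum_fraction_def
      sum_tuples_mult[of "\<lambda>es. ?z es xs" "length xs" _ "\<lambda>es. ?z es ys" "length ys", symmetric]
    by simp
  finally show ?thesis .
qed

lemma integral_cos_sum_powers_split:
  assumes A1: "finite A1" "A1 \<subseteq> {1..}" "\<forall>k\<in>A1. k \<le> r"
    and A2: "finite A2" "\<forall>k\<in>A2. r + split_gap M \<le> k" and "i + j \<le> M"
  shows "integral {0..1} (\<lambda>\<omega>. cos_sum A1 \<omega> ^ i * cos_sum A2 \<omega> ^ j) = moment i A1 * moment j A2"
proof -
  let ?P = "\<lambda>xs \<omega>. \<Prod>k\<leftarrow>xs. cos (2 * pi * Re (a k) * \<omega>)"
  have A2': "A2 \<subseteq> {1..}"
    using A2(2) by (force simp: split_gap_def)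
  have "integral {0..1} (\<lambda>\<omega>. cos_sum A1 \<omega> ^ i * cos_sum A2 \<omega> ^ j)
      = integral {0..1} (\<lambda>\<omega>. \<Sum>xs\<in>tuples i A1. \<Sum>ys\<in>tuples j A2. ?P (xs @ ys) \<omega>)"
    unfolding cos_sum_def by (simp add: power_sum_eq_sum_tuples A1(1) A2(1) sum_product)
  also have "\<dots> = (\<Sum>xs\<in>tuples i A1. integral {0..1} (\<lambda>\<omega>. \<Sum>ys\<in>tuples j A2. ?P (xs @ ys) \<omega>))"
    by (intro integral_sum finite_tuples A1(1) integrable_continuous_interval continuous_on_sum
        continuous_on_prod_cos)
  also have "\<dots> = (\<Sum>xs\<in>tuples i A1. \<Sum>ys\<in>tuples j A2. integral {0..1} (?P (xs @ ys)))"
    by (intro sum.cong refl integral_sum finite_tuples A2(1) integrable_continuous_interval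
        continuous_on_prod_cos)
  also have "\<dots> = (\<Sum>xs\<in>tuples i A1. \<Sum>ys\<in>tuples j A2. zero_sum_fraction xs * zero_sum_fraction ys)"
  proof (intro sum.cong refl)
    fix xs ys assume xs: "xs \<in> tuples i A1" and ys: "ys \<in> tuples j A2"
    have "integral {0..1} (?P (xs @ ys)) = zero_sum_fraction (xs @ ys)"
      by (rule integral_prod_cos) (use xs ys A1(2) A2' in \<open>auto simp: tuples_def\<close>)
    also have "\<dots> = zero_sum_fraction xs * zero_sum_fraction ys"
      by (rule zero_sum_fraction_append) (use xs ys A1(3) A2(2) \<open>i + j \<le> M\<close> in \<open>auto simp: tuples_def\<close>)
    finally show "integral {0..1} (?P (xs @ ys)) = zero_sum_fraction xs * zero_sum_fraction ys" .
  qed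
  also have "\<dots> = moment i A1 * moment j A2"
    unfolding moment_eq_sum_tuples[OF A1(1,2)] moment_eq_sum_tuples[OF A2(1) A2']
    by (rule sum_product[symmetric])
  finally show ?thesis .
qed

lemma higher_deriv_mgf_product:
  assumes A: "finite A" "A \<subseteq> {1..}" "\<forall>x\<in>A. x \<le> r \<or> r + split_gap M \<le> x" and "i \<le> M"
  defines "A1 \<equiv> {x\<in>A. x \<le> r}" and "A2 \<equiv> {x\<in>A. r + split_gap M \<le> x}"
  shows "(deriv ^^ i) (\<lambda>t. mgf A1 t * mgf A2 t) 0 = moment i A"
proof -
  have "split_gap M \<ge> 1"
    by (simp add: split_gap_def)
  then have "A = A1 \<union> A2" "A1 \<inter> A2 = {}"
    using A(3) by (auto simp: A1_def A2_def)
  moreover have "finite A1" "finite A2"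
    using A(1) by (auto simp: A1_def A2_def)
  ultimately have cos_sum_split: "cos_sum A \<omega> = cos_sum A1 \<omega> + cos_sum A2 \<omega>" for \<omega>
    unfolding cos_sum_def by (metis sum.union_disjoint)
  have "(deriv ^^ i) (\<lambda>t. mgf A1 t * mgf A2 t) 0 =
      (\<Sum>l\<le>i. real (i choose l) * (moment l A1 * moment (i - l) A2))"
    unfolding moment_def by (intro higher_deriv_mult_smooth smooth_mgf)
  also have "\<dots> = (\<Sum>l\<le>i. real (i choose l) *
      integral {0..1} (\<lambda>\<omega>. cos_sum A1 \<omega> ^ l * cos_sum A2 \<omega> ^ (i - l)))"
    using A \<open>i \<le> M\<close>
    by (intro sum.cong refl arg_cong2[where f = "(*)"] integral_cos_sum_powers_split[symmetric])
      (auto simp: A1_def A2_def)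
  also have "\<dots> = integral {0..1}
      (\<lambda>\<omega>. \<Sum>l\<le>i. real (i choose l) * (cos_sum A1 \<omega> ^ l * cos_sum A2 \<omega> ^ (i - l)))"
    by (subst integral_sum)
       (auto intro!: integrable_continuous_interval continuous_intros
          continuous_on_subset[OF continuous_cos_sum])
  also have "\<dots> = moment i A"
    unfolding moment_def higher_deriv_mgf_unit_0[OF continuous_cos_sum] cos_sum_split
    by (simp add: binomial_ring mult.assoc)
  finally show ?thesis .
qed

lemma cumul_gap_additive:
  assumes A: "finite A" "A \<subseteq> {1..}" "\<forall>x\<in>A. x \<le> r \<or> r + split_gap M \<le> x" and "k \<le> M"
  shows "cumul k A = cumul k {x\<in>A. x \<le> r} + cumul k {x\<in>A. r + split_gap M \<le> x}"
proof -
  define A1 where "A1 = {x\<in>A. x \<le> r}"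
  define A2 where "A2 = {x\<in>A. r + split_gap M \<le> x}"
  have "cumul k A = (deriv ^^ k) (\<lambda>t. ln (mgf A1 t * mgf A2 t)) 0"
    unfolding cumul_def
    using higher_deriv_mgf_product[OF A] \<open>k \<le> M\<close> mgf_pos
    by (intro higher_deriv_ln_eq_if_higher_deriv_eq[of _ _ M] smooth_mgf smooth_mult)
       (auto simp: moment_def A1_def A2_def)
  also have "(\<lambda>t. ln (mgf A1 t * mgf A2 t)) = (\<lambda>t. ln (mgf A1 t) + ln (mgf A2 t))"
    using mgf_pos by (simp add: ln_mult_pos)
  also have "(deriv ^^ k) \<dots> 0 = cumul k A1 + cumul k A2"
    unfolding cumul_def using smooth_ln[OF smooth_mgf mgf_pos]
    by (simp add: higher_deriv_add_smooth)
  finally show ?thesis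
    unfolding A1_def A2_def .
qed

lemma cumul_eventually_linear: "\<exists>w b N. \<forall>n\<ge>N. cumul m {1..n} = w * real n + b"
proof (cases "m = 0")
  case True
  then show ?thesis
    by (intro exI[of _ 0]) (simp add: cumul_def)
next
  case False
  obtain \<psi> where \<psi>: "\<And>A. finite A \<Longrightarrow> A \<subseteq> {1..} \<Longrightarrow> cumul m A = (\<Sum>xs\<in>tuples m A. \<psi> xs)"
    using tuple_sum_form_cumul[of m] False unfolding tuple_sum_form_def by auto
  interpret gap_additive_setfun "cumul m" \<psi> m "split_gap m" "shift_threshold m"
  proof
    show "1 \<le> m" "1 \<le> split_gap m" "1 \<le> shift_threshold m"
      using False by (simp_all add: split_gap_def shift_threshold_def)
  qed (use \<psi> cumul_gap_additive cumul_shift in auto)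
  show ?thesis
    by (rule eventually_linear)
qed

lemma cumul_eventually_dyadic_linear:
  "\<exists>N. \<exists>w b :: int. \<forall>n>N. cumul m {1..n} = (1/2) ^ m * (of_int w * real n + of_int b)"
proof -
  obtain w b N where lin: "\<And>n. N \<le> n \<Longrightarrow> cumul m {1..n} = w * real n + b"
    using cumul_eventually_linear by blast
  have dyadic: "2 ^ m * cumul m {1..n} \<in> \<int>" for n
    by (rule dyadic_cumul) auto
  have "2 ^ m * w = 2 ^ m * cumul m {1..Suc N} - 2 ^ m * cumul m {1..N}"
    using lin[of N] lin[of "Suc N"] by (simp add: algebra_simps)
  then have "2 ^ m * w \<in> \<int>"
    using dyadic by simp
  then obtain W where W: "2 ^ m * w = of_int W"
    by (elim Ints_cases)
  have "2 ^ m * b = 2 ^ m * cumul m {1..N} - real N * (2 ^ m * w)"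
    using lin[of N] by (simp add: algebra_simps)
  then have "2 ^ m * b \<in> \<int>"
    using dyadic \<open>2 ^ m * w \<in> \<int>\<close> by simp
  then obtain B where B: "2 ^ m * b = of_int B"
    by (elim Ints_cases)
  have "cumul m {1..n} = (1/2) ^ m * (of_int W * real n + of_int B)" if "N < n" for n
    using lin[of n] that W[symmetric] B[symmetric] by (simp add: algebra_simps power_one_over)
  then show ?thesis
    by blast
qed

end

theorem theoremC:
  fixes d :: nat and p :: "int poly" and lam c :: "nat \<Rightarrow> complex"
  assumes irred: "irreducible p"
    and deg: "degree p = d"
    and roots: "map_poly of_int p = smult (of_int (lead_coeff p)) (\<Prod>i=1..d. [:- lam i, 1:])"
    and d_pos: "d \<ge> 1"
    and real1: "lam 1 \<in> \<real>"
    and gt1: "Re (lam 1) > 1"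
    and dom: "\<forall>i\<in>{2..d}. cmod (lam i) < Re (lam 1)"
    and c1: "c 1 \<noteq> 0"
    and posint: "\<forall>k\<ge>1. \<exists>z::int. z > 0 \<and> lin_rec_seq d c lam k = of_int z"
  shows "\<forall>m::nat. \<exists>n1::nat. \<exists>w b :: int. \<forall>n::nat. n > n1 \<longrightarrow>
           cumulant (lebesgue_on {0..1}) m (S_sum (lin_rec_seq d c lam) n)
             = (1/2) ^ m * (of_int w * real n + of_int b)"
proof
  fix m :: nat
  interpret integer_dominant_root_seq d lam c "Re (lam 1)"
  proof
    show "lam 1 = complex_of_real (Re (lam 1))"
      using real1 by (simp add: complex_is_Real_iff complex_eq_iff)
    show "poly (map_poly of_int q) (lam l) = 0"
      if "poly (map_poly of_int q) (lam 1) = 0" "l \<in> {1..d}" for q l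
      using irreducible_int_poly_conjugate_root[OF irred roots _ _ _ that(1)] that(2) d_pos by simp
    show "\<forall>k\<ge>1. \<exists>z::int. lin_rec_seq d c lam k = of_int z"
      using posint by blast
  qed (fact gt1 dom c1 d_pos)+
  have "S_sum (lin_rec_seq d c lam) n = cos_sum {1..n}" for n
    by (simp add: fun_eq_iff S_sum_def cos_sum_def)
  then have cumulant_eq:
      "cumulant (lebesgue_on {0..1}) m (S_sum (lin_rec_seq d c lam) n) = cumul m {1..n}" for n
    unfolding cumul_def by (simp add: cumulant_eq_higher_deriv_ln_mgf_unit[OF continuous_cos_sum])
  show "\<exists>n1. \<exists>w b :: int. \<forall>n>n1. cumulant (lebesgue_on {0..1}) m (S_sum (lin_rec_seq d c lam) n)
      = (1/2) ^ m * (of_int w * real n + of_int b)"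
    unfolding cumulant_eq by (rule cumul_eventually_dyadic_linear)
qed

end
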